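(* Let $U\subset\mathbb{R}^n$, $V\subset\mathbb{R}^m$ be open, let $X\subset U$ and $Y\subset V$ be closed in $U$, $V$ respectively, and let $\varphi:V\to U$ be a $\mathcal{C}^p$ mapping with $\varphi(Y)\subset X$. Let $k\ge1$ and, for $i=0,1,\dots,k$, let $(b_{ij})_{j\ge1}$ be a sequence in $Y$ and $(\eta_{ij})_{j\ge1}$ a sequence in $\mathcal{P}_p(\mathbb{R}^m)^*$ such that: (1) the sequences $(b_{ij})_j$, $i=0,\dots,k$, converge to a common point $b\in Y$, and $\sum_{i=0}^k\eta_{ij}$ converges to $\eta\in\mathcal{P}_p(\mathbb{R}^m)^*$; (2) $|b_{ij}-b_{0j}|^{p-|\beta|}|\eta_{ij,\beta}(b_{ij})|\le c$ for all $i,j$ and all $\beta\in\mathbb{N}^m$ with $|\beta|\le p$, where $c$ is a constant. Set $a_{ij}=\varphi(b_{ij})$, $\xi_{ij}=\varphi_{*b_{ij}}(\eta_{ij})$, $a=\varphi(b)$, $\xi=\varphi_{*b}(\eta)$. Then: (1$'$) each $(a_{ij})_j$ converges to $a\in X$, and $\sum_{i=0}^k\xi_{ij}$ converges to $\xi$; (2$'$) there is a constant $c'$ such that $|a_{ij}-a_{0j}|^{p-|\alpha|}|\xi_{ij,\alpha}(a_{ij})|\le c'$ for all $i,j$ and all $\alpha\in\mathbb{N}^n$ with $|\alpha|\le p$.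
   Context: $\mathcal{P}_p(\mathbb{R}^d)$ denotes the space of real polynomials on $\mathbb{R}^d$ of degree $\le p$, with dual $\mathcal{P}_p(\mathbb{R}^d)^*$. For $\zeta\in\mathcal{P}_p(\mathbb{R}^d)^*$, $c\in\mathbb{R}^d$, $\gamma\in\mathbb{N}^d$ with $|\gamma|\le p$: $\zeta_\gamma(c):=\zeta(\tfrac1{\gamma!}(x-c)^\gamma)$. For $b\in V$, $\varphi^*_b:\mathcal{P}_p(\mathbb{R}^n)\to\mathcal{P}_p(\mathbb{R}^m)$ is $\varphi^*_b(P)=T^p_b(P\circ\varphi)$ (Taylor polynomial of order $p$ at $b$), and $\varphi_{*b}:\mathcal{P}_p(\mathbb{R}^m)^*\to\mathcal{P}_p(\mathbb{R}^n)^*$ is its dual, $\varphi_{*b}(\eta)(P)=\eta(\varphi^*_b(P))$. *)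

theory Defs
  imports "HOL-Analysis.Analysis"
begin

definition mdeg :: "('n::finite \<Rightarrow> nat) \<Rightarrow> nat" where
  "mdeg \<gamma> = (\<Sum>i\<in>UNIV. \<gamma> i)"

definition mfact :: "('n::finite \<Rightarrow> nat) \<Rightarrow> nat" where
  "mfact \<gamma> = (\<Prod>i\<in>UNIV. fact (\<gamma> i))"

definition mpow :: "real^'n::finite \<Rightarrow> ('n \<Rightarrow> nat) \<Rightarrow> real" where
  "mpow x \<gamma> = (\<Prod>i\<in>UNIV. (x $ i) ^ (\<gamma> i))"

definition polys :: "nat \<Rightarrow> (real^'n::finite \<Rightarrow> real) set" where
  "polys p = {P. \<exists>a::('n \<Rightarrow> nat) \<Rightarrow> real.
      P = (\<lambda>x. \<Sum>\<gamma>\<in>{\<gamma>. mdeg \<gamma> \<le> p}. a \<gamma> * mpow x \<gamma>)}"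

text \<open>Elements of the dual: functionals that are linear on the polynomials
  (only their values on polys p matter).\<close>
definition pdual :: "nat \<Rightarrow> ((real^'n::finite \<Rightarrow> real) \<Rightarrow> real) set" where
  "pdual p = {\<zeta>. (\<forall>P\<in>polys p. \<forall>Q\<in>polys p. \<zeta> (\<lambda>x. P x + Q x) = \<zeta> P + \<zeta> Q) \<and>
                 (\<forall>P\<in>polys p. \<forall>r. \<zeta> (\<lambda>x. r * P x) = r * \<zeta> P)}"

definition dual_tendsto :: "nat \<Rightarrow> (nat \<Rightarrow> (real^'n::finite \<Rightarrow> real) \<Rightarrow> real)
     \<Rightarrow> ((real^'n \<Rightarrow> real) \<Rightarrow> real) \<Rightarrow> bool" where
  "dual_tendsto p Z \<zeta> \<longleftrightarrow> (\<forall>P\<in>polys p. (\<lambda>j. Z j P) \<longlonglongrightarrow> \<zeta> P)"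

text \<open>zeta_gamma(c) = zeta((x-c)^gamma / gamma!)\<close>
definition zcomp :: "((real^'n::finite \<Rightarrow> real) \<Rightarrow> real) \<Rightarrow> real^'n \<Rightarrow> ('n \<Rightarrow> nat) \<Rightarrow> real" where
  "zcomp \<zeta> c \<gamma> = \<zeta> (\<lambda>x. mpow (x - c) \<gamma> / real (mfact \<gamma>))"

definition partial :: "'n::finite \<Rightarrow> (real^'n \<Rightarrow> real) \<Rightarrow> real^'n \<Rightarrow> real" where
  "partial i f x = deriv (\<lambda>t. f (x + t *\<^sub>R axis i 1)) 0"

fun pdl :: "'n::finite list \<Rightarrow> (real^'n \<Rightarrow> real) \<Rightarrow> real^'n \<Rightarrow> real" where
  "pdl [] f = f"
| "pdl (i # is) f = partial i (pdl is f)"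

definition idx_list :: "'n::finite list" where
  "idx_list = (SOME xs. distinct xs \<and> set xs = UNIV)"

text \<open>partial^beta f (for C^p functions the order of differentiation is irrelevant)\<close>
definition mderiv :: "('n::finite \<Rightarrow> nat) \<Rightarrow> (real^'n \<Rightarrow> real) \<Rightarrow> real^'n \<Rightarrow> real" where
  "mderiv \<beta> f = pdl (concat (map (\<lambda>i. replicate (\<beta> i) i) idx_list)) f"

definition Cp_on :: "nat \<Rightarrow> (real^'n::finite) set \<Rightarrow> (real^'n \<Rightarrow> real) \<Rightarrow> bool" where
  "Cp_on p V f \<longleftrightarrow>
     (\<forall>l. length l < p \<longrightarrow> (\<forall>i. \<forall>x\<in>V. (\<lambda>t. pdl l f (x + t *\<^sub>R axis i 1)) differentiable (at 0))) \<and>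
     (\<forall>l. length l \<le> p \<longrightarrow> continuous_on V (pdl l f))"

definition Cp_map_on :: "nat \<Rightarrow> (real^'m::finite) set \<Rightarrow> (real^'m \<Rightarrow> real^'n::finite) \<Rightarrow> bool" where
  "Cp_map_on p V \<phi> \<longleftrightarrow> (\<forall>k. Cp_on p V (\<lambda>x. \<phi> x $ k))"

definition taylor :: "nat \<Rightarrow> real^'n::finite \<Rightarrow> (real^'n \<Rightarrow> real) \<Rightarrow> real^'n \<Rightarrow> real" where
  "taylor p b f = (\<lambda>y. \<Sum>\<beta>\<in>{\<beta>. mdeg \<beta> \<le> p}. mderiv \<beta> f b / real (mfact \<beta>) * mpow (y - b) \<beta>)"

definition pullback :: "nat \<Rightarrow> (real^'m::finite \<Rightarrow> real^'n::finite) \<Rightarrow> real^'m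
     \<Rightarrow> (real^'n \<Rightarrow> real) \<Rightarrow> real^'m \<Rightarrow> real" where
  "pullback p \<phi> b P = taylor p b (P \<circ> \<phi>)"

definition pushfwd :: "nat \<Rightarrow> (real^'m::finite \<Rightarrow> real^'n::finite) \<Rightarrow> real^'m
     \<Rightarrow> ((real^'m \<Rightarrow> real) \<Rightarrow> real) \<Rightarrow> (real^'n \<Rightarrow> real) \<Rightarrow> real" where
  "pushfwd p \<phi> b \<eta> = (\<lambda>P. \<eta> (pullback p \<phi> b P))"

end

(*
  Write T_b g for the Taylor polynomial of order p of g at b, and take a polynomial P of degree
  at most p, g = P o phi.

  For (1'), the sum over i of xi_ij(P) is the sum of eta_ij(T_{b_ij} g).  Re-expanding the
  monomials around b_0j shows that eta_ij(T_{b_ij} g) - eta_ij(T_{b_0j} g) is the sum over beta of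
  eta_ij,beta(b_ij) times the Taylor remainder of d^beta g of order p - |beta| between b_0j and
  b_ij.  Taylor's theorem, uniformly near b, makes that remainder o(|b_ij - b_0j|^(p-|beta|)),
  so by (2) the difference tends to 0; and the sum over i of eta_ij(T_{b_0j} g) tends to
  eta(T_b g) because the functionals converge and the coefficients depend continuously on the
  centre.

  For (2'), xi_ij,alpha(a_ij) is the sum over beta of d^beta G(b_ij) eta_ij,beta(b_ij) with
  G = (phi - a_ij)^alpha / alpha!.  G vanishes to order |alpha| at b_ij, so only |beta| >= |alpha|
  contributes; the derivatives of G stay bounded, phi is locally Lipschitz, and eventually
  |b_ij - b_0j| <= 1, so |a_ij - a_0j|^(p-|alpha|) <= L^(p-|alpha|) |b_ij - b_0j|^(p-|beta|) and
  (2) bounds every term.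

  Composing multi-index derivatives needs the symmetry of mixed partial derivatives, which is
  derived from the mean value theorem.
*)

theory Submission
  imports Defs "HOL-Library.Function_Algebras"
begin

lemma finite_mdeg_le: "finite {\<gamma>::'n::finite\<Rightarrow>nat. mdeg \<gamma> \<le> p}"
proof -
  have "{\<gamma>::'n\<Rightarrow>nat. mdeg \<gamma> \<le> p} \<subseteq> PiE UNIV (\<lambda>_. {..p})"
  proof
    fix \<gamma> :: "'n \<Rightarrow> nat" assume "\<gamma> \<in> {\<gamma>. mdeg \<gamma> \<le> p}"
    hence "\<gamma> i \<le> p" for i
      using member_le_sum[of i UNIV \<gamma>] by (auto simp: mdeg_def)
    thus "\<gamma> \<in> PiE UNIV (\<lambda>_. {..p})" by (auto simp: PiE_UNIV_domain)
  qed
  moreover have "finite (PiE (UNIV::'n set) (\<lambda>_. {..p}))" by (intro finite_PiE) auto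
  ultimately show ?thesis by (rule finite_subset)
qed

lemma finite_multi_index_le: "finite {\<beta>::'n::finite\<Rightarrow>nat. \<beta> \<le> \<gamma>}"
proof -
  have "{\<beta>::'n\<Rightarrow>nat. \<beta> \<le> \<gamma>} = PiE UNIV (\<lambda>k. {..\<gamma> k})"
    by (auto simp: PiE_UNIV_domain le_fun_def)
  thus ?thesis by (auto intro: finite_PiE)
qed

lemma mdeg_add: "mdeg (\<beta> + \<delta>) = mdeg \<beta> + mdeg \<delta>"
  by (simp add: mdeg_def sum.distrib)

lemma mdeg_zero[simp]: "mdeg 0 = 0"
  by (simp add: mdeg_def)

lemma mdeg_eq_0_iff: "mdeg (\<gamma>::'n::finite\<Rightarrow>nat) = 0 \<longleftrightarrow> \<gamma> = 0"
  by (auto simp: mdeg_def fun_eq_iff)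

lemma mdeg_mono: "\<beta> \<le> \<gamma> \<Longrightarrow> mdeg \<beta> \<le> mdeg \<gamma>"
  by (auto simp: mdeg_def le_fun_def intro: sum_mono)

lemma mdeg_diff: "\<beta> \<le> \<gamma> \<Longrightarrow> mdeg (\<gamma> - \<beta>) = mdeg \<gamma> - mdeg \<beta>"
proof -
  assume "\<beta> \<le> \<gamma>"
  hence "\<gamma> = \<beta> + (\<gamma> - \<beta>)" by (auto simp: fun_eq_iff le_fun_def)
  hence "mdeg \<gamma> = mdeg \<beta> + mdeg (\<gamma> - \<beta>)" by (metis mdeg_add)
  thus ?thesis by simp
qed

lemma mpow_0[simp]: "mpow x 0 = 1"
  by (simp add: mpow_def)

lemma mfact_0[simp]: "mfact 0 = 1"
  by (simp add: mfact_def)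

lemma mfact_pos: "mfact \<gamma> > 0"
  by (simp add: mfact_def prod_pos)

lemma mfact_neq_0[simp]: "real (mfact \<gamma>) \<noteq> 0"
  using mfact_pos[of \<gamma>] by simp

lemma zero_mpow: "mpow (0::real^'n::finite) \<gamma> = (if \<gamma> = 0 then 1 else 0)"
proof (cases "\<gamma> = 0")
  case False
  then obtain i where "\<gamma> i \<noteq> 0" by (auto simp: fun_eq_iff)
  hence "(0::real) ^ \<gamma> i = 0" by simp
  hence "(\<Prod>i\<in>UNIV. (0::real) ^ \<gamma> i) = 0" by (intro prod_zero) auto
  thus ?thesis using False by (simp add: mpow_def)
qed simp

lemma binomial_div_fact:
  fixes a b :: real
  shows "(a + b) ^ n / fact n = (\<Sum>i\<in>{..n}. a ^ i / fact i * (b ^ (n - i) / fact (n - i)))"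
proof -
  have "(a + b) ^ n = (\<Sum>i\<le>n. of_nat (n choose i) * a ^ i * b ^ (n - i))"
    by (simp add: binomial_ring)
  hence "(a + b) ^ n / fact n = (\<Sum>i\<le>n. of_nat (n choose i) * a ^ i * b ^ (n - i) / fact n)"
    by (simp add: sum_divide_distrib)
  also have "\<dots> = (\<Sum>i\<in>{..n}. a ^ i / fact i * (b ^ (n - i) / fact (n - i)))"
  proof (rule sum.cong)
    fix i assume "i \<in> {..n}"
    hence "real (n choose i) = fact n / (fact i * fact (n - i))"
      by (simp add: binomial_fact)
    thus "of_nat (n choose i) * a ^ i * b ^ (n - i) / fact n = a ^ i / fact i * (b ^ (n - i) / fact (n - i))"
      by (simp add: field_simps)
  qed simp
  finally show ?thesis .
qed

lemma mpow_add_div_mfact: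
  fixes u v :: "real^'n::finite"
  shows "mpow (u + v) \<gamma> / real (mfact \<gamma>) =
     (\<Sum>\<beta>\<in>{\<beta>. \<beta> \<le> \<gamma>}. mpow u \<beta> / real (mfact \<beta>) * (mpow v (\<gamma> - \<beta>) / real (mfact (\<gamma> - \<beta>))))"
proof -
  have "mpow (u + v) \<gamma> / real (mfact \<gamma>) = (\<Prod>k\<in>UNIV. (u$k + v$k) ^ \<gamma> k / fact (\<gamma> k))"
    by (simp add: mpow_def mfact_def prod_dividef)
  also have "\<dots> = (\<Prod>k\<in>UNIV. \<Sum>i\<in>{..\<gamma> k}. u$k ^ i / fact i * (v$k ^ (\<gamma> k - i) / fact (\<gamma> k - i)))"
    by (simp add: binomial_div_fact)
  also have "\<dots> = (\<Sum>\<beta>\<in>PiE UNIV (\<lambda>k. {..\<gamma> k}). \<Prod>k\<in>UNIV. u$k ^ \<beta> k / fact (\<beta> k) * (v$k ^ (\<gamma> k - \<beta> k) / fact (\<gamma> k - \<beta> k)))"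
    by (rule prod_sum_PiE) auto
  also have "PiE UNIV (\<lambda>k. {..\<gamma> k}) = {\<beta>. \<beta> \<le> \<gamma>}"
    by (auto simp: PiE_UNIV_domain le_fun_def)
  also have "(\<Sum>\<beta>\<in>{\<beta>. \<beta> \<le> \<gamma>}. \<Prod>k\<in>UNIV. u$k ^ \<beta> k / fact (\<beta> k) * (v$k ^ (\<gamma> k - \<beta> k) / fact (\<gamma> k - \<beta> k)))
     = (\<Sum>\<beta>\<in>{\<beta>. \<beta> \<le> \<gamma>}. mpow u \<beta> / real (mfact \<beta>) * (mpow v (\<gamma> - \<beta>) / real (mfact (\<gamma> - \<beta>))))"
    by (simp add: mpow_def mfact_def prod_dividef prod.distrib)
  finally show ?thesis .
qed

lemma polys_sum_monomials:
  assumes "S \<subseteq> {\<gamma>::'n::finite\<Rightarrow>nat. mdeg \<gamma> \<le> p}"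
  shows "(\<lambda>x::real^'n. \<Sum>\<beta>\<in>S. a \<beta> * mpow x \<beta>) \<in> polys p"
proof -
  let ?a = "\<lambda>\<beta>. if \<beta> \<in> S then a \<beta> else 0"
  have "(\<lambda>x::real^'n. \<Sum>\<beta>\<in>S. a \<beta> * mpow x \<beta>) = (\<lambda>x. \<Sum>\<gamma>\<in>{\<gamma>. mdeg \<gamma> \<le> p}. ?a \<gamma> * mpow x \<gamma>)"
    using assms finite_mdeg_le by (intro ext sum.mono_neutral_cong_left) auto
  thus ?thesis unfolding polys_def by (intro CollectI exI[of _ ?a])
qed

lemma polys_add: "P \<in> polys p \<Longrightarrow> Q \<in> polys p \<Longrightarrow> (\<lambda>x. P x + Q x) \<in> polys p"
proof -
  assume "P \<in> polys p" "Q \<in> polys p"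
  then obtain a b where P: "P = (\<lambda>x. \<Sum>\<gamma>\<in>{\<gamma>. mdeg \<gamma> \<le> p}. a \<gamma> * mpow x \<gamma>)"
     and Q: "Q = (\<lambda>x. \<Sum>\<gamma>\<in>{\<gamma>. mdeg \<gamma> \<le> p}. b \<gamma> * mpow x \<gamma>)" unfolding polys_def by blast
  have "(\<lambda>x. P x + Q x) = (\<lambda>x. \<Sum>\<gamma>\<in>{\<gamma>. mdeg \<gamma> \<le> p}. (a \<gamma> + b \<gamma>) * mpow x \<gamma>)"
    by (simp add: P Q sum.distrib ring_distribs)
  thus ?thesis unfolding polys_def by (intro CollectI exI[of _ "\<lambda>\<gamma>. a \<gamma> + b \<gamma>"])
qed

lemma polys_scale: "P \<in> polys p \<Longrightarrow> (\<lambda>x. r * P x) \<in> polys p"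
proof -
  assume "P \<in> polys p"
  then obtain a where P: "P = (\<lambda>x. \<Sum>\<gamma>\<in>{\<gamma>. mdeg \<gamma> \<le> p}. a \<gamma> * mpow x \<gamma>)"
     unfolding polys_def by blast
  have "(\<lambda>x. r * P x) = (\<lambda>x. \<Sum>\<gamma>\<in>{\<gamma>. mdeg \<gamma> \<le> p}. (r * a \<gamma>) * mpow x \<gamma>)"
    by (simp add: P sum_distrib_left mult.assoc)
  thus ?thesis unfolding polys_def by (intro CollectI exI[of _ "\<lambda>\<gamma>. r * a \<gamma>"]) simp
qed

lemma polys_zero: "(\<lambda>x. 0) \<in> polys p"
  using polys_sum_monomials[of "{}" p] by simp

lemma polys_sum: "finite S \<Longrightarrow> (\<And>s. s \<in> S \<Longrightarrow> F s \<in> polys p) \<Longrightarrow> (\<lambda>x. \<Sum>s\<in>S. F s x) \<in> polys p"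
  by (induction S rule: finite_induct) (auto simp: polys_zero intro!: polys_add)

lemma shifted_monomial_in_polys:
  fixes c :: "real^'n::finite"
  assumes "mdeg \<gamma> \<le> p"
  shows "(\<lambda>x. mpow (x - c) \<gamma> / real (mfact \<gamma>)) \<in> polys p"
proof -
  have "(\<lambda>x. mpow (x - c) \<gamma> / real (mfact \<gamma>)) =
     (\<lambda>x. \<Sum>\<beta>\<in>{\<beta>. \<beta> \<le> \<gamma>}. (mpow (- c) (\<gamma> - \<beta>) / real (mfact (\<gamma> - \<beta>)) / real (mfact \<beta>)) * mpow x \<beta>)"
  proof
    fix x :: "real^'n"
    have "mpow (x - c) \<gamma> / real (mfact \<gamma>) = mpow (x + - c) \<gamma> / real (mfact \<gamma>)" by simp
    also have "\<dots> = (\<Sum>\<beta>\<in>{\<beta>. \<beta> \<le> \<gamma>}. (mpow (- c) (\<gamma> - \<beta>) / real (mfact (\<gamma> - \<beta>)) / real (mfact \<beta>)) * mpow x \<beta>)"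
      unfolding mpow_add_div_mfact by (intro sum.cong) (auto simp: mult_ac)
    finally show "mpow (x - c) \<gamma> / real (mfact \<gamma>) = \<dots>" .
  qed
  also have "\<dots> \<in> polys p"
    using assms by (intro polys_sum_monomials) (auto dest: mdeg_mono)
  finally show ?thesis .
qed

lemma pdual_zero: "\<zeta> \<in> pdual p \<Longrightarrow> \<zeta> (\<lambda>x. 0) = 0"
proof -
  assume "\<zeta> \<in> pdual p"
  hence "\<forall>P\<in>polys p. \<forall>r. \<zeta> (\<lambda>x. r * P x) = r * \<zeta> P" by (simp add: pdual_def)
  from this[rule_format, OF polys_zero, of 0] show ?thesis by simp
qed

lemma pdual_scale: "\<zeta> \<in> pdual p \<Longrightarrow> P \<in> polys p \<Longrightarrow> \<zeta> (\<lambda>x. r * P x) = r * \<zeta> P"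
  by (simp add: pdual_def)

lemma pdual_add: "\<zeta> \<in> pdual p \<Longrightarrow> P \<in> polys p \<Longrightarrow> Q \<in> polys p \<Longrightarrow> \<zeta> (\<lambda>x. P x + Q x) = \<zeta> P + \<zeta> Q"
  by (simp add: pdual_def)

lemma pdual_sum:
  assumes "\<zeta> \<in> pdual p" "finite S" "\<And>s. s \<in> S \<Longrightarrow> F s \<in> polys p"
  shows "\<zeta> (\<lambda>x. \<Sum>s\<in>S. F s x) = (\<Sum>s\<in>S. \<zeta> (F s))"
  using assms(2,3)
proof (induction S rule: finite_induct)
  case empty thus ?case using pdual_zero[OF assms(1)] by simp
next
  case (insert s S)
  have "\<zeta> (\<lambda>x. \<Sum>s\<in>insert s S. F s x) = \<zeta> (\<lambda>x. F s x + (\<Sum>s\<in>S. F s x))"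
    using insert by simp
  also have "\<dots> = \<zeta> (F s) + \<zeta> (\<lambda>x. \<Sum>s\<in>S. F s x)"
    by (rule pdual_add[OF assms(1)]) (use insert.prems insert.hyps polys_sum[of S F p] in auto)
  finally show ?case using insert by simp
qed

lemma pdual_taylor:
  assumes "\<zeta> \<in> pdual p"
  shows "\<zeta> (taylor p b f) = (\<Sum>\<beta>\<in>{\<beta>. mdeg \<beta> \<le> p}. mderiv \<beta> f b * zcomp \<zeta> b \<beta>)"
proof -
  have "taylor p b f = (\<lambda>y. \<Sum>\<beta>\<in>{\<beta>. mdeg \<beta> \<le> p}. mderiv \<beta> f b * (mpow (y - b) \<beta> / real (mfact \<beta>)))"
    unfolding taylor_def by (intro ext sum.cong) auto
  hence "\<zeta> (taylor p b f) = (\<Sum>\<beta>\<in>{\<beta>. mdeg \<beta> \<le> p}. \<zeta> (\<lambda>y. mderiv \<beta> f b * (mpow (y - b) \<beta> / real (mfact \<beta>))))"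
    by (simp only:) (rule pdual_sum[OF assms finite_mdeg_le], rule polys_scale, rule shifted_monomial_in_polys, simp)
  also have "\<dots> = (\<Sum>\<beta>\<in>{\<beta>. mdeg \<beta> \<le> p}. mderiv \<beta> f b * zcomp \<zeta> b \<beta>)"
    by (rule sum.cong[OF refl], unfold zcomp_def, rule pdual_scale[OF assms shifted_monomial_in_polys], simp)
  finally show ?thesis .
qed

lemma zcomp_recenter:
  assumes "\<zeta> \<in> pdual p" "mdeg \<gamma> \<le> p"
  shows "zcomp \<zeta> x \<gamma> = (\<Sum>\<beta>\<in>{\<beta>. \<beta> \<le> \<gamma>}. (mpow (y - x) (\<gamma> - \<beta>) / real (mfact (\<gamma> - \<beta>))) * zcomp \<zeta> y \<beta>)"
proof -
  have "(\<lambda>z. mpow (z - x) \<gamma> / real (mfact \<gamma>)) =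
     (\<lambda>z. \<Sum>\<beta>\<in>{\<beta>. \<beta> \<le> \<gamma>}. (mpow (y - x) (\<gamma> - \<beta>) / real (mfact (\<gamma> - \<beta>))) * (mpow (z - y) \<beta> / real (mfact \<beta>)))"
  proof
    fix z
    have "z - x = (z - y) + (y - x)" by simp
    hence "mpow (z - x) \<gamma> / real (mfact \<gamma>) = mpow ((z - y) + (y - x)) \<gamma> / real (mfact \<gamma>)" by simp
    also have "\<dots> = (\<Sum>\<beta>\<in>{\<beta>. \<beta> \<le> \<gamma>}. (mpow (y - x) (\<gamma> - \<beta>) / real (mfact (\<gamma> - \<beta>))) * (mpow (z - y) \<beta> / real (mfact \<beta>)))"
      unfolding mpow_add_div_mfact by (intro sum.cong) (auto simp: mult_ac)
    finally show "mpow (z - x) \<gamma> / real (mfact \<gamma>) = \<dots>" .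
  qed
  hence "zcomp \<zeta> x \<gamma> = (\<Sum>\<beta>\<in>{\<beta>. \<beta> \<le> \<gamma>}. \<zeta> (\<lambda>z. (mpow (y - x) (\<gamma> - \<beta>) / real (mfact (\<gamma> - \<beta>))) * (mpow (z - y) \<beta> / real (mfact \<beta>))))"
    unfolding zcomp_def using assms
    by (simp only:) (rule pdual_sum[OF assms(1) finite_multi_index_le], rule polys_scale, rule shifted_monomial_in_polys, use assms(2) in \<open>auto dest: mdeg_mono\<close>)
  also have "\<dots> = (\<Sum>\<beta>\<in>{\<beta>. \<beta> \<le> \<gamma>}. (mpow (y - x) (\<gamma> - \<beta>) / real (mfact (\<gamma> - \<beta>))) * zcomp \<zeta> y \<beta>)"
    by (rule sum.cong[OF refl], unfold zcomp_def, rule pdual_scale[OF assms(1) shifted_monomial_in_polys], use assms(2) in \<open>auto dest: mdeg_mono\<close>)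
  finally show ?thesis .
qed

abbreviation axis_differentiable :: "(real^'n::finite \<Rightarrow> real) \<Rightarrow> real^'n \<Rightarrow> 'n \<Rightarrow> bool" where
  "axis_differentiable f x i \<equiv> (\<lambda>t. f (x + t *\<^sub>R axis i 1)) differentiable (at 0)"

lemma has_real_derivative_partial:
  "axis_differentiable f x i \<Longrightarrow> ((\<lambda>t. f (x + t *\<^sub>R axis i 1)) has_real_derivative partial i f x) (at 0)"
  unfolding partial_def by (simp add: DERIV_deriv_iff_real_differentiable)

lemma partial_if_has_real_derivative:
  assumes "((\<lambda>t. f (x + t *\<^sub>R axis i 1)) has_real_derivative D) (at 0)"
  shows "axis_differentiable f x i" "partial i f x = D"
  using assms unfolding partial_def by (auto simp: real_differentiable_def intro: DERIV_imp_deriv)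

lemma has_real_derivative_axis_shift:
  fixes x e :: "'a::real_vector"
  assumes "((\<lambda>t. f ((x + s *\<^sub>R e) + t *\<^sub>R e)) has_real_derivative D) (at 0)"
  shows "((\<lambda>t. f (x + t *\<^sub>R e)) has_real_derivative D) (at s)"
proof -
  have "(\<lambda>t. f ((x + s *\<^sub>R e) + t *\<^sub>R e)) = (\<lambda>t. (\<lambda>u. f (x + u *\<^sub>R e)) (t + s))"
    by (rule ext, rule arg_cong[where f=f]) (simp add: scaleR_add_left algebra_simps)
  with assms have "((\<lambda>t. (\<lambda>u. f (x + u *\<^sub>R e)) (t + s)) has_real_derivative D) (at 0)" by simp
  hence "((\<lambda>u. f (x + u *\<^sub>R e)) has_real_derivative D) (at (0 + s))"
    by (subst DERIV_shift) simp
  thus ?thesis by simp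
qed

lemma has_real_derivative_axis_line:
  assumes "axis_differentiable f (x + s *\<^sub>R axis i 1) i"
  shows "((\<lambda>u. f (x + u *\<^sub>R axis i 1)) has_real_derivative partial i f (x + s *\<^sub>R axis i 1)) (at s)"
  by (rule has_real_derivative_axis_shift, rule has_real_derivative_partial, rule assms)

lemma eventually_axis_line_in:
  fixes x :: "real^'n::finite"
  assumes "open V" "x \<in> V"
  shows "eventually (\<lambda>t. x + t *\<^sub>R axis i 1 \<in> V) (nhds (0::real))"
proof -
  obtain r where r: "r > 0" "ball x r \<subseteq> V" using assms openE by blast
  show ?thesis unfolding eventually_nhds_metric
  proof (intro exI[of _ r] conjI allI impI)
    fix t :: real assume "dist t 0 < r"
    hence "norm ((x + t *\<^sub>R axis i 1) - x) < r" by simp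
    thus "x + t *\<^sub>R axis i 1 \<in> V" using r by (auto simp: dist_norm norm_minus_commute)
  qed fact
qed

lemma partial_cong:
  fixes f g :: "real^'n::finite \<Rightarrow> real"
  assumes "open V" "\<forall>z\<in>V. f z = g z" "x \<in> V"
  shows "partial i f x = partial i g x" "axis_differentiable f x i = axis_differentiable g x i"
proof -
  have ev: "eventually (\<lambda>t. f (x + t *\<^sub>R axis i 1) = g (x + t *\<^sub>R axis i 1)) (nhds (0::real))"
    using eventually_axis_line_in[OF assms(1,3)] by eventually_elim (use assms(2) in auto)
  have *: "((\<lambda>t. f (x + t *\<^sub>R axis i 1)) has_real_derivative D) (at 0) \<longleftrightarrow>
           ((\<lambda>t. g (x + t *\<^sub>R axis i 1)) has_real_derivative D) (at 0)" for D
    by (rule DERIV_cong_ev[OF refl ev refl])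
  show "partial i f x = partial i g x" unfolding partial_def deriv_def using * by simp
  show "axis_differentiable f x i = axis_differentiable g x i" unfolding real_differentiable_def using * by simp
qed

lemma pdl_cong:
  fixes f g :: "real^'n::finite \<Rightarrow> real"
  assumes "open V" "\<forall>z\<in>V. f z = g z"
  shows "x \<in> V \<Longrightarrow> pdl l f x = pdl l g x"
proof (induction l arbitrary: x)
  case Nil thus ?case using assms by simp
next
  case (Cons i l)
  thus ?case using partial_cong(1)[OF assms(1), of "pdl l f" "pdl l g" x i] by simp
qed

lemma Cp_cong:
  fixes f g :: "real^'n::finite \<Rightarrow> real"
  assumes "open V" "\<forall>z\<in>V. f z = g z" "Cp_on p V f"
  shows "Cp_on p V g"
proof -
  have e: "\<forall>z\<in>V. pdl l f z = pdl l g z" for l using pdl_cong[OF assms(1,2)] by blast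
  have c: "continuous_on V (pdl l g)" if "length l \<le> p" for l
  proof -
    have "continuous_on V (pdl l f)" using conjunct2[OF assms(3)[unfolded Cp_on_def], rule_format, OF that] .
    moreover have "continuous_on V (pdl l f) = continuous_on V (pdl l g)"
      by (rule continuous_on_cong[OF refl]) (use e in blast)
    ultimately show ?thesis by simp
  qed
  have d: "axis_differentiable (pdl l g) x i" if "length l < p" "x \<in> V" for l x i
  proof -
    have "axis_differentiable (pdl l f) x i" using conjunct1[OF assms(3)[unfolded Cp_on_def], rule_format, OF that(1) that(2)] .
    thus ?thesis using partial_cong(2)[OF assms(1) e[of l] that(2)] by simp
  qed
  show ?thesis unfolding Cp_on_def using c d by blast
qed

lemma pdl_append: "pdl (a @ b) f = pdl a (pdl b f)"
  by (induction a) auto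

lemma Cp_pdl:
  fixes f :: "real^'n::finite \<Rightarrow> real"
  assumes "Cp_on p V f" "length l \<le> p"
  shows "Cp_on (p - length l) V (pdl l f)"
  unfolding Cp_on_def
proof (intro conjI allI impI ballI)
  fix l' :: "'n list" and i :: 'n and x assume l': "length l' < p - length l" and x: "x \<in> V"
  hence "length (l' @ l) < p" by simp
  from conjunct1[OF assms(1)[unfolded Cp_on_def], rule_format, OF this x, of i]
  show "axis_differentiable (pdl l' (pdl l f)) x i" by (simp add: pdl_append)
next
  fix l' :: "'n list" assume l': "length l' \<le> p - length l"
  hence "length (l' @ l) \<le> p" using assms(2) by simp
  from conjunct2[OF assms(1)[unfolded Cp_on_def], rule_format, OF this]
  show "continuous_on V (pdl l' (pdl l f))" by (simp add: pdl_append)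
qed

lemma Cp_mono:
  fixes f :: "real^'n::finite \<Rightarrow> real"
  assumes "q \<le> p" "Cp_on p V f"
  shows "Cp_on q V f"
  unfolding Cp_on_def
proof (intro conjI allI impI ballI)
  fix l :: "'n list" and i :: 'n and x assume "length l < q" "x \<in> V"
  thus "axis_differentiable (pdl l f) x i" using conjunct1[OF assms(2)[unfolded Cp_on_def], rule_format, of l x i] assms(1) by simp
next
  fix l :: "'n list" assume "length l \<le> q"
  thus "continuous_on V (pdl l f)" using conjunct2[OF assms(2)[unfolded Cp_on_def], rule_format, of l] assms(1) by simp
qed

lemma Cp_imp_continuous_on:
  fixes f :: "real^'n::finite \<Rightarrow> real"
  assumes "Cp_on p V f" shows "continuous_on V f"
  using conjunct2[OF assms[unfolded Cp_on_def], rule_format, of "[]"] by simp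

lemma Cp_0_iff: "Cp_on 0 V f \<longleftrightarrow> continuous_on V f"
proof
  assume "continuous_on V f"
  thus "Cp_on 0 V f" unfolding Cp_on_def by simp
qed (rule Cp_imp_continuous_on)

lemma Cp_SucD:
  fixes f :: "real^'n::finite \<Rightarrow> real"
  assumes "Cp_on (Suc p) V f"
  shows "continuous_on V f" "\<And>i x. x \<in> V \<Longrightarrow> axis_differentiable f x i" "\<And>i. Cp_on p V (partial i f)"
proof -
  show "continuous_on V f" by (rule Cp_imp_continuous_on[OF assms])
  show "axis_differentiable f x i" if "x \<in> V" for i x
    using conjunct1[OF assms[unfolded Cp_on_def], rule_format, of "[]" x i] that by simp
  show "Cp_on p V (partial i f)" for i using Cp_pdl[OF assms, of "[i]"] by simp
qed

lemma Cp_SucI: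
  fixes f :: "real^'n::finite \<Rightarrow> real"
  assumes "continuous_on V f" "\<And>i x. x \<in> V \<Longrightarrow> axis_differentiable f x i" "\<And>i. Cp_on p V (partial i f)"
  shows "Cp_on (Suc p) V f"
  unfolding Cp_on_def
proof (intro conjI allI impI ballI)
  fix l :: "'n list" and i :: 'n and x assume l: "length l < Suc p" and x: "x \<in> V"
  show "axis_differentiable (pdl l f) x i"
  proof (cases l rule: rev_cases)
    case Nil thus ?thesis using assms(2)[OF x] by simp
  next
    case (snoc l' j)
    hence "pdl l f = pdl l' (partial j f)" by (simp add: pdl_append)
    moreover have "length l' < p" using l snoc by simp
    ultimately show ?thesis using conjunct1[OF assms(3)[of j, unfolded Cp_on_def], rule_format, of l' x i] x by simp
  qed
next
  fix l :: "'n list" assume l: "length l \<le> Suc p"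
  show "continuous_on V (pdl l f)"
  proof (cases l rule: rev_cases)
    case Nil thus ?thesis using assms(1) by simp
  next
    case (snoc l' j)
    hence "pdl l f = pdl l' (partial j f)" by (simp add: pdl_append)
    moreover have "length l' \<le> p" using l snoc by simp
    ultimately show ?thesis using conjunct2[OF assms(3)[of j, unfolded Cp_on_def], rule_format, of l'] by simp
  qed
qed

lemma partial_const: "partial i (\<lambda>z. c) = (\<lambda>x. 0)"
  unfolding partial_def by (intro ext DERIV_imp_deriv) simp

lemma partial_add:
  assumes "axis_differentiable f x i" "axis_differentiable g x i"
  shows "partial i (\<lambda>z. f z + g z) x = partial i f x + partial i g x" "axis_differentiable (\<lambda>z. f z + g z) x i"
  using partial_if_has_real_derivative[OF DERIV_add[OF has_real_derivative_partial[OF assms(1)] has_real_derivative_partial[OF assms(2)]]] by auto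

lemma partial_mult:
  assumes "axis_differentiable f x i" "axis_differentiable g x i"
  shows "partial i (\<lambda>z. f z * g z) x = f x * partial i g x + partial i f x * g x" "axis_differentiable (\<lambda>z. f z * g z) x i"
  using partial_if_has_real_derivative[OF DERIV_mult[OF has_real_derivative_partial[OF assms(1)] has_real_derivative_partial[OF assms(2)]]]
  by (auto simp: algebra_simps)

lemma partial_scale:
  assumes "axis_differentiable f x i"
  shows "partial i (\<lambda>z. r * f z) x = r * partial i f x" "axis_differentiable (\<lambda>z. r * f z) x i"
  using partial_if_has_real_derivative[OF DERIV_cmult[OF has_real_derivative_partial[OF assms(1)], of r]] by auto

lemma Cp_const: "Cp_on p V (\<lambda>z. c)"
proof (induction p arbitrary: c)
  case 0 thus ?case by (simp add: Cp_0_iff)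
next
  case (Suc p)
  show ?case by (rule Cp_SucI) (auto simp: partial_const Suc.IH)
qed

lemma Cp_add:
  assumes "open V"
  shows "Cp_on p V f \<Longrightarrow> Cp_on p V g \<Longrightarrow> Cp_on p V (\<lambda>z. f z + g z)"
proof (induction p arbitrary: f g)
  case 0 thus ?case by (simp add: Cp_0_iff continuous_on_add)
next
  case (Suc p)
  note f = Cp_SucD[OF Suc.prems(1)]
  note g = Cp_SucD[OF Suc.prems(2)]
  show ?case
  proof (rule Cp_SucI)
    show "continuous_on V (\<lambda>z. f z + g z)" using f g by (intro continuous_on_add)
    show "axis_differentiable (\<lambda>z. f z + g z) x i" if "x \<in> V" for i x using partial_add(2)[OF f(2)[OF that] g(2)[OF that]] .
    show "Cp_on p V (partial i (\<lambda>z. f z + g z))" for i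
    proof (rule Cp_cong[OF assms])
      show "Cp_on p V (\<lambda>z. partial i f z + partial i g z)" using Suc.IH f(3) g(3) by blast
      show "\<forall>z\<in>V. partial i f z + partial i g z = partial i (\<lambda>z. f z + g z) z"
        using partial_add(1)[OF f(2) g(2)] by simp
    qed
  qed
qed

lemma Cp_scale:
  assumes "open V"
  shows "Cp_on p V f \<Longrightarrow> Cp_on p V (\<lambda>z. r * f z)"
proof (induction p arbitrary: f)
  case 0 thus ?case by (simp add: Cp_0_iff continuous_on_mult continuous_on_const)
next
  case (Suc p)
  note f = Cp_SucD[OF Suc.prems(1)]
  show ?case
  proof (rule Cp_SucI)
    show "continuous_on V (\<lambda>z. r * f z)" using f by (intro continuous_on_mult continuous_on_const)
    show "axis_differentiable (\<lambda>z. r * f z) x i" if "x \<in> V" for i x using partial_scale(2)[OF f(2)[OF that]] .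
    show "Cp_on p V (partial i (\<lambda>z. r * f z))" for i
    proof (rule Cp_cong[OF assms])
      show "Cp_on p V (\<lambda>z. r * partial i f z)" using Suc.IH f(3) by blast
      show "\<forall>z\<in>V. r * partial i f z = partial i (\<lambda>z. r * f z) z"
        using partial_scale(1)[OF f(2)] by simp
    qed
  qed
qed

lemma Cp_mult:
  assumes "open V"
  shows "Cp_on p V f \<Longrightarrow> Cp_on p V g \<Longrightarrow> Cp_on p V (\<lambda>z. f z * g z)"
proof (induction p arbitrary: f g)
  case 0 thus ?case by (simp add: Cp_0_iff continuous_on_mult)
next
  case (Suc p)
  note f = Cp_SucD[OF Suc.prems(1)]
  note g = Cp_SucD[OF Suc.prems(2)]
  have fp: "Cp_on p V f" "Cp_on p V g" using Suc.prems Cp_mono[of p "Suc p"] by auto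
  show ?case
  proof (rule Cp_SucI)
    show "continuous_on V (\<lambda>z. f z * g z)" using f g by (intro continuous_on_mult)
    show "axis_differentiable (\<lambda>z. f z * g z) x i" if "x \<in> V" for i x using partial_mult(2)[OF f(2)[OF that] g(2)[OF that]] .
    show "Cp_on p V (partial i (\<lambda>z. f z * g z))" for i
    proof (rule Cp_cong[OF assms])
      show "Cp_on p V (\<lambda>z. f z * partial i g z + partial i f z * g z)"
        by (rule Cp_add[OF assms]; rule Suc.IH) (auto simp: fp f(3) g(3))
      show "\<forall>z\<in>V. f z * partial i g z + partial i f z * g z = partial i (\<lambda>z. f z * g z) z"
        using partial_mult(1)[OF f(2) g(2)] by simp
    qed
  qed
qed

lemma Cp_diff:
  assumes "open V" "Cp_on p V f" "Cp_on p V g"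
  shows "Cp_on p V (\<lambda>z. f z - g z)"
proof -
  have "Cp_on p V (\<lambda>z. f z + (-1) * g z)" by (intro Cp_add Cp_scale assms)
  thus ?thesis by simp
qed

lemma Cp_sum:
  assumes "open V" "finite S" "\<And>s. s \<in> S \<Longrightarrow> Cp_on p V (F s)"
  shows "Cp_on p V (\<lambda>z. \<Sum>s\<in>S. F s z)"
  using assms(2,3)
proof (induction S rule: finite_induct)
  case empty thus ?case by (simp add: Cp_const)
next
  case (insert s S)
  have "Cp_on p V (\<lambda>z. F s z + (\<Sum>s\<in>S. F s z))"
    by (rule Cp_add[OF assms(1)]) (use insert in auto)
  thus ?case using insert by simp
qed

lemma Cp_prod:
  assumes "open V" "finite S" "\<And>s. s \<in> S \<Longrightarrow> Cp_on p V (F s)"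
  shows "Cp_on p V (\<lambda>z. \<Prod>s\<in>S. F s z)"
  using assms(2,3)
proof (induction S rule: finite_induct)
  case empty thus ?case by (simp add: Cp_const)
next
  case (insert s S)
  have "Cp_on p V (\<lambda>z. F s z * (\<Prod>s\<in>S. F s z))"
    by (rule Cp_mult[OF assms(1)]) (use insert in auto)
  thus ?case using insert by simp
qed

lemma Cp_power:
  assumes "open V" "Cp_on p V f"
  shows "Cp_on p V (\<lambda>z. f z ^ n)"
proof (induction n)
  case 0 thus ?case by (simp add: Cp_const)
next
  case (Suc n)
  have "Cp_on p V (\<lambda>z. f z * f z ^ n)" by (rule Cp_mult[OF assms(1) assms(2) Suc.IH])
  thus ?case by simp
qed

lemma pdl_const: "pdl l (\<lambda>z. c) = (\<lambda>z. if l = [] then c else 0)"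
  by (induction l) (auto simp: partial_const)

lemma Cp_axis_differentiable:
  fixes f :: "real^'n::finite \<Rightarrow> real"
  assumes "Cp_on p V f" "length l < p" "x \<in> V"
  shows "axis_differentiable (pdl l f) x i"
  using conjunct1[OF assms(1)[unfolded Cp_on_def], rule_format, OF assms(2,3)] .

lemma pdl_add:
  assumes "open V" "Cp_on p V f" "Cp_on p V g"
  shows "length l \<le> p \<Longrightarrow> x \<in> V \<Longrightarrow> pdl l (\<lambda>z. f z + g z) x = pdl l f x + pdl l g x"
proof (induction l arbitrary: x)
  case Nil thus ?case by simp
next
  case (Cons i l)
  have "pdl (i # l) (\<lambda>z. f z + g z) x = partial i (pdl l (\<lambda>z. f z + g z)) x" by simp
  also have "\<dots> = partial i (\<lambda>z. pdl l f z + pdl l g z) x"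
    by (rule partial_cong(1)[OF assms(1) _ Cons.prems(2)]) (use Cons in auto)
  also have "\<dots> = partial i (pdl l f) x + partial i (pdl l g) x"
    using Cons.prems by (intro partial_add Cp_axis_differentiable[OF assms(2)] Cp_axis_differentiable[OF assms(3)]) auto
  finally show ?case by simp
qed

lemma pdl_scale:
  assumes "open V" "Cp_on p V f"
  shows "length l \<le> p \<Longrightarrow> x \<in> V \<Longrightarrow> pdl l (\<lambda>z. r * f z) x = r * pdl l f x"
proof (induction l arbitrary: x)
  case Nil thus ?case by simp
next
  case (Cons i l)
  have "pdl (i # l) (\<lambda>z. r * f z) x = partial i (pdl l (\<lambda>z. r * f z)) x" by simp
  also have "\<dots> = partial i (\<lambda>z. r * pdl l f z) x"
    by (rule partial_cong(1)[OF assms(1) _ Cons.prems(2)]) (use Cons in auto)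
  also have "\<dots> = r * partial i (pdl l f) x"
    using Cons.prems by (intro partial_scale Cp_axis_differentiable[OF assms(2)]) auto
  finally show ?case by simp
qed

lemma pdl_sum:
  assumes "open V" "finite S" "\<And>s. s \<in> S \<Longrightarrow> Cp_on p V (F s)" "length l \<le> p" "x \<in> V"
  shows "pdl l (\<lambda>z. \<Sum>s\<in>S. F s z) x = (\<Sum>s\<in>S. pdl l (F s) x)"
  using assms(2,3)
proof (induction S rule: finite_induct)
  case empty thus ?case by (simp add: pdl_const)
next
  case (insert s S)
  have "pdl l (\<lambda>z. \<Sum>s\<in>insert s S. F s z) x = pdl l (\<lambda>z. F s z + (\<Sum>s\<in>S. F s z)) x"
    using insert by simp
  also have "\<dots> = pdl l (F s) x + pdl l (\<lambda>z. \<Sum>s\<in>S. F s z) x"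
    by (rule pdl_add[OF assms(1) _ _ assms(4,5)]) (use insert in \<open>auto intro: Cp_sum[OF assms(1)]\<close>)
  finally show ?case using insert by simp
qed

section \<open>Symmetry of mixed partial derivatives\<close>

lemma mvt_signed:
  fixes G :: "real \<Rightarrow> real"
  assumes "\<And>s. (0 \<le> s \<and> s \<le> t \<or> t \<le> s \<and> s \<le> 0) \<Longrightarrow> (G has_real_derivative G' s) (at s)"
  shows "\<exists>s. (0 \<le> s \<and> s \<le> t \<or> t \<le> s \<and> s \<le> 0) \<and> G t - G 0 = t * G' s"
proof (cases t "0::real" rule: linorder_cases)
  case less
  from MVT2[OF this, of G G'] assms less obtain z where "t < z" "z < 0" "G 0 - G t = (0 - t) * G' z"
    by force
  thus ?thesis by (intro exI[of _ z]) (auto simp: algebra_simps)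
next
  case greater
  from MVT2[OF this, of G G'] assms greater obtain z where "0 < z" "z < t" "G t - G 0 = (t - 0) * G' z"
    by force
  thus ?thesis by (intro exI[of _ z]) auto
qed (intro exI[of _ 0], simp)

definition mixed_difference :: "(real^'n::finite \<Rightarrow> real) \<Rightarrow> real^'n \<Rightarrow> 'n \<Rightarrow> 'n \<Rightarrow> real \<Rightarrow> real" where
  "mixed_difference f x i j t =
     f (x + t *\<^sub>R axis i 1 + t *\<^sub>R axis j 1) - f (x + t *\<^sub>R axis i 1) - f (x + t *\<^sub>R axis j 1) + f x"

lemma mixed_difference_commute: "mixed_difference f x i j t = mixed_difference f x j i t"
  by (simp add: mixed_difference_def algebra_simps)

lemma mixed_difference_mvt:
  fixes f :: "real^'n::finite \<Rightarrow> real"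
  assumes V: "open V" and f: "Cp_on 2 V f" and t: "t > 0"
    and box: "\<And>s r. 0 \<le> s \<Longrightarrow> s \<le> t \<Longrightarrow> 0 \<le> r \<Longrightarrow> r \<le> t \<Longrightarrow> x + s *\<^sub>R axis i 1 + r *\<^sub>R axis j 1 \<in> V"
  shows "\<exists>s r. 0 \<le> s \<and> s \<le> t \<and> 0 \<le> r \<and> r \<le> t \<and>
     mixed_difference f x i j t = t * t * partial j (partial i f) (x + s *\<^sub>R axis i 1 + r *\<^sub>R axis j 1)"
proof -
  let ?ei = "axis i (1::real)" and ?ej = "axis j (1::real)"
  have f1: "axis_differentiable f z k" and f2: "axis_differentiable (partial k' f) z k" if "z \<in> V" for z k k'
    using Cp_axis_differentiable[OF f, of "[]" z k] Cp_axis_differentiable[OF f, of "[k']" z k] that by simp_all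
  define G where "G \<sigma> = f ((x + t *\<^sub>R ?ej) + \<sigma> *\<^sub>R ?ei) - f (x + \<sigma> *\<^sub>R ?ei)" for \<sigma>
  have "G t - G 0 = mixed_difference f x i j t"
    unfolding G_def mixed_difference_def by (simp add: algebra_simps)
  moreover have "\<exists>\<sigma>. (0 \<le> \<sigma> \<and> \<sigma> \<le> t \<or> t \<le> \<sigma> \<and> \<sigma> \<le> 0) \<and> G t - G 0 =
          t * (partial i f ((x + t *\<^sub>R ?ej) + \<sigma> *\<^sub>R ?ei) - partial i f (x + \<sigma> *\<^sub>R ?ei))"
  proof (rule mvt_signed)
    fix \<sigma> assume "0 \<le> \<sigma> \<and> \<sigma> \<le> t \<or> t \<le> \<sigma> \<and> \<sigma> \<le> 0"
    hence "(x + t *\<^sub>R ?ej) + \<sigma> *\<^sub>R ?ei \<in> V" "x + \<sigma> *\<^sub>R ?ei \<in> V"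
      using box[of \<sigma> t] box[of \<sigma> 0] t by (auto simp: algebra_simps)
    thus "(G has_real_derivative
            partial i f ((x + t *\<^sub>R ?ej) + \<sigma> *\<^sub>R ?ei) - partial i f (x + \<sigma> *\<^sub>R ?ei)) (at \<sigma>)"
      unfolding G_def by (intro DERIV_diff has_real_derivative_axis_line f1)
  qed
  ultimately obtain \<sigma> where \<sigma>: "0 \<le> \<sigma>" "\<sigma> \<le> t" and eq1: "mixed_difference f x i j t =
          t * (partial i f ((x + \<sigma> *\<^sub>R ?ei) + t *\<^sub>R ?ej) - partial i f ((x + \<sigma> *\<^sub>R ?ei) + 0 *\<^sub>R ?ej))"
    using t by (auto simp: algebra_simps)
  have "\<exists>\<rho>. (0 \<le> \<rho> \<and> \<rho> \<le> t \<or> t \<le> \<rho> \<and> \<rho> \<le> 0) \<and>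
          partial i f ((x + \<sigma> *\<^sub>R ?ei) + t *\<^sub>R ?ej) - partial i f ((x + \<sigma> *\<^sub>R ?ei) + 0 *\<^sub>R ?ej)
            = t * partial j (partial i f) ((x + \<sigma> *\<^sub>R ?ei) + \<rho> *\<^sub>R ?ej)"
  proof (rule mvt_signed)
    fix \<rho> assume "0 \<le> \<rho> \<and> \<rho> \<le> t \<or> t \<le> \<rho> \<and> \<rho> \<le> 0"
    hence "(x + \<sigma> *\<^sub>R ?ei) + \<rho> *\<^sub>R ?ej \<in> V" using box[OF \<sigma>, of \<rho>] t by auto
    thus "((\<lambda>\<rho>. partial i f ((x + \<sigma> *\<^sub>R ?ei) + \<rho> *\<^sub>R ?ej)) has_real_derivative
            partial j (partial i f) ((x + \<sigma> *\<^sub>R ?ei) + \<rho> *\<^sub>R ?ej)) (at \<rho>)"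
      by (intro has_real_derivative_axis_line f2)
  qed
  then obtain \<rho> where "0 \<le> \<rho>" "\<rho> \<le> t" "mixed_difference f x i j t =
          t * t * partial j (partial i f) (x + \<sigma> *\<^sub>R ?ei + \<rho> *\<^sub>R ?ej)"
    using t eq1 by auto
  thus ?thesis using \<sigma> by blast
qed

lemma mixed_difference_approx:
  fixes f :: "real^'n::finite \<Rightarrow> real"
  assumes V: "open V" and f: "Cp_on 2 V f" and x: "x \<in> V" and \<epsilon>: "\<epsilon> > 0"
  shows "eventually (\<lambda>t. \<bar>mixed_difference f x i j t - t * t * partial j (partial i f) x\<bar> \<le> \<epsilon> * (t * t))
           (at_right 0)"
proof -
  let ?D = "partial j (partial i f)"
  have "continuous_on V ?D" using Cp_imp_continuous_on[OF Cp_pdl[OF f, of "[j, i]"]] by simp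
  hence "isCont ?D x" using continuous_on_eq_continuous_at[OF V] x by blast
  hence "(?D \<longlongrightarrow> ?D x) (nhds x)" by (simp add: isCont_def tendsto_at_iff_tendsto_nhds)
  hence "eventually (\<lambda>z. z \<in> V \<and> dist (?D z) (?D x) < \<epsilon>) (nhds x)"
    by (intro eventually_conj eventually_nhds_in_open[OF V x] tendstoD[OF _ \<epsilon>])
  then obtain d where d: "d > 0" and near: "\<And>z. dist z x < d \<Longrightarrow> z \<in> V \<and> dist (?D z) (?D x) < \<epsilon>"
    unfolding eventually_nhds_metric by blast
  have "\<bar>mixed_difference f x i j t - t * t * ?D x\<bar> \<le> \<epsilon> * (t * t)" if t: "0 < t" "t < d / 2" for t
  proof -
    have "dist (x + s *\<^sub>R axis i 1 + r *\<^sub>R axis j 1) x < d"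
      if "0 \<le> s" "s \<le> t" "0 \<le> r" "r \<le> t" for s r
      using norm_triangle_ineq[of "s *\<^sub>R axis i (1::real)" "r *\<^sub>R axis j 1"] that t
      by (simp add: dist_norm)
    note near' = near[OF this]
    obtain s r where sr: "0 \<le> s" "s \<le> t" "0 \<le> r" "r \<le> t"
      and eq: "mixed_difference f x i j t = t * t * ?D (x + s *\<^sub>R axis i 1 + r *\<^sub>R axis j 1)"
      using mixed_difference_mvt[OF V f t(1)] near' by blast
    have "\<bar>mixed_difference f x i j t - t * t * ?D x\<bar>
        = t * t * dist (?D (x + s *\<^sub>R axis i 1 + r *\<^sub>R axis j 1)) (?D x)"
      by (simp add: eq dist_real_def abs_mult right_diff_distrib[symmetric])
    also have "\<dots> \<le> \<epsilon> * (t * t)" using near'[OF sr] t by simp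
    finally show ?thesis .
  qed
  thus ?thesis unfolding eventually_at_right_field using d by (intro exI[of _ "d / 2"]) auto
qed

lemma partial_commute:
  fixes f :: "real^'n::finite \<Rightarrow> real"
  assumes V: "open V" and f: "Cp_on 2 V f" and x: "x \<in> V"
  shows "partial i (partial j f) x = partial j (partial i f) x"
proof -
  let ?A = "partial j (partial i f) x" and ?B = "partial i (partial j f) x"
  have "\<bar>?A - ?B\<bar> \<le> 0 + \<epsilon>" if \<epsilon>: "\<epsilon> > 0" for \<epsilon>
  proof -
    have "eventually (\<lambda>t. 0 < t \<and> \<bar>mixed_difference f x i j t - t * t * ?A\<bar> \<le> \<epsilon> / 2 * (t * t)
            \<and> \<bar>mixed_difference f x j i t - t * t * ?B\<bar> \<le> \<epsilon> / 2 * (t * t)) (at_right 0)"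
      using \<epsilon> by (intro eventually_conj eventually_at_right_less mixed_difference_approx[OF V f x]) auto
    then obtain t where t: "0 < t" and "\<bar>mixed_difference f x i j t - t * t * ?A\<bar> \<le> \<epsilon> / 2 * (t * t)"
      and "\<bar>mixed_difference f x j i t - t * t * ?B\<bar> \<le> \<epsilon> / 2 * (t * t)"
      using eventually_happens'[OF trivial_limit_at_right_real] by blast
    hence "\<bar>(t * t) * (?A - ?B)\<bar> \<le> (t * t) * \<epsilon>"
      unfolding mixed_difference_commute[of f x j i] abs_le_iff by (simp add: algebra_simps)
    thus ?thesis using t by (simp add: abs_mult)
  qed
  hence "\<bar>?A - ?B\<bar> \<le> 0" by (rule field_le_epsilon)
  thus ?thesis by simp
qed

lemma pdl_swap:
  fixes f :: "real^'n::finite \<Rightarrow> real"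
  assumes V: "open V" and f: "Cp_on p V f" and len: "length (l1 @ i # j # l2) \<le> p" and x: "x \<in> V"
  shows "pdl (l1 @ i # j # l2) f x = pdl (l1 @ j # i # l2) f x"
proof -
  have "Cp_on (p - length l2) V (pdl l2 f)" using Cp_pdl[OF f, of l2] len by simp
  hence F: "Cp_on 2 V (pdl l2 f)" by (rule Cp_mono[rotated]) (use len in simp)
  have "\<forall>z\<in>V. partial i (partial j (pdl l2 f)) z = partial j (partial i (pdl l2 f)) z"
    using partial_commute[OF V F] by blast
  hence "pdl l1 (partial i (partial j (pdl l2 f))) x = pdl l1 (partial j (partial i (pdl l2 f))) x"
    by (rule pdl_cong[OF V _ x])
  thus ?thesis by (simp add: pdl_append)
qed

lemma pdl_move_to_front:
  fixes f :: "real^'n::finite \<Rightarrow> real"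
  assumes V: "open V" and f: "Cp_on p V f"
  shows "length (u @ a # w) \<le> p \<Longrightarrow> \<forall>y\<in>V. pdl (u @ a # w) f y = pdl (a # u @ w) f y"
proof (induction u)
  case Nil thus ?case by simp
next
  case (Cons b u)
  have IH: "\<forall>y\<in>V. pdl (u @ a # w) f y = pdl (a # u @ w) f y" using Cons by simp
  show ?case
  proof
    fix y assume y: "y \<in> V"
    have "pdl ((b # u) @ a # w) f y = partial b (pdl (u @ a # w) f) y" by simp
    also have "\<dots> = partial b (pdl (a # u @ w) f) y" by (rule partial_cong(1)[OF V IH y])
    also have "\<dots> = pdl ([] @ b # a # u @ w) f y" by simp
    also have "\<dots> = pdl ([] @ a # b # u @ w) f y" by (rule pdl_swap[OF V f _ y]) (use Cons.prems in simp)
    finally show "pdl ((b # u) @ a # w) f y = pdl (a # (b # u) @ w) f y" by simp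
  qed
qed

lemma pdl_mset_cong:
  fixes f :: "real^'n::finite \<Rightarrow> real"
  assumes V: "open V" and f: "Cp_on p V f"
  shows "length l \<le> p \<Longrightarrow> mset l = mset l' \<Longrightarrow> \<forall>x\<in>V. pdl l f x = pdl l' f x"
proof (induction l arbitrary: l')
  case Nil thus ?case by simp
next
  case (Cons a r)
  have "a \<in> set l'" using Cons.prems(2) by (metis list.set_intros(1) set_mset_mset)
  then obtain u w where l': "l' = u @ a # w" by (meson split_list)
  have ms: "mset r = mset (u @ w)" using Cons.prems(2) l' by simp
  have lenl': "length (u @ a # w) \<le> p" using Cons.prems l' by (metis mset_eq_length)
  have IH: "\<forall>x\<in>V. pdl r f x = pdl (u @ w) f x" using Cons.IH[OF _ ms] Cons.prems by simp
  show ?case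
  proof
    fix x assume x: "x \<in> V"
    have "pdl (a # r) f x = partial a (pdl r f) x" by simp
    also have "\<dots> = partial a (pdl (u @ w) f) x" by (rule partial_cong(1)[OF V IH x])
    also have "\<dots> = pdl (a # u @ w) f x" by simp
    also have "\<dots> = pdl (u @ a # w) f x" using pdl_move_to_front[OF V f lenl'] x by simp
    finally show "pdl (a # r) f x = pdl l' f x" using l' by simp
  qed
qed

definition mindex_list :: "('n::finite \<Rightarrow> nat) \<Rightarrow> 'n list" where
  "mindex_list \<beta> = concat (map (\<lambda>i. replicate (\<beta> i) i) idx_list)"

lemma idx_list_distinct_UNIV: "distinct (idx_list :: 'n::finite list) \<and> set idx_list = (UNIV :: 'n set)"
proof -
  have "\<exists>xs::'n list. distinct xs \<and> set xs = UNIV"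
    using finite_distinct_list[of "UNIV :: 'n set"] by auto
  thus ?thesis unfolding idx_list_def by (rule someI_ex)
qed

lemma set_idx_list[simp]: "set (idx_list :: 'n::finite list) = UNIV"
  using idx_list_distinct_UNIV by blast

lemma distinct_idx_list[simp]: "distinct (idx_list :: 'n::finite list)"
  using idx_list_distinct_UNIV by blast

lemma count_concat_replicate:
  "count (mset (concat (map (\<lambda>i. replicate (\<beta> i) i) xs))) k = (\<Sum>i\<leftarrow>xs. if i = k then \<beta> i else 0)"
  by (induction xs) auto

lemma mderiv_eq_pdl: "mderiv \<beta> f = pdl (mindex_list \<beta>) f"
  by (simp add: mderiv_def mindex_list_def)

lemma count_mindex_list: "count (mset (mindex_list \<beta>)) k = \<beta> k"
proof -
  have "count (mset (mindex_list \<beta>)) k = (\<Sum>i\<leftarrow>idx_list. count (mset (replicate (\<beta> i) i)) k)"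
    unfolding mindex_list_def count_concat_replicate by (simp add: eq_commute)
  also have "\<dots> = (\<Sum>i\<in>set idx_list. count (mset (replicate (\<beta> i) i)) k)"
    by (rule sum_list_distinct_conv_sum_set) simp
  also have "\<dots> = (\<Sum>i\<in>UNIV. if i = k then \<beta> i else 0)"
    by simp
  also have "\<dots> = \<beta> k" by simp
  finally show ?thesis .
qed

lemma length_mindex_list: "length (mindex_list \<beta>) = mdeg \<beta>"
proof -
  have "length (mindex_list \<beta>) = (\<Sum>i\<leftarrow>idx_list. \<beta> i)"
    unfolding mindex_list_def by (simp add: length_concat o_def)
  also have "\<dots> = (\<Sum>i\<in>set idx_list. \<beta> i)"
    by (rule sum_list_distinct_conv_sum_set) simp
  also have "\<dots> = mdeg \<beta>" by (simp add: mdeg_def)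
  finally show ?thesis .
qed

lemma mindex_list_0[simp]: "mindex_list 0 = []"
  using length_mindex_list[of 0] by simp

lemma mderiv_0[simp]: "mderiv 0 f = f"
  by (simp add: mderiv_eq_pdl)

definition munit :: "'n \<Rightarrow> 'n \<Rightarrow> nat" where "munit i = (\<lambda>k. if k = i then 1 else 0)"

lemma mdeg_munit[simp]: "mdeg (munit (i::'n::finite)) = 1"
  by (simp add: mdeg_def munit_def)

lemma mderiv_mderiv:
  fixes f :: "real^'n::finite \<Rightarrow> real"
  assumes V: "open V" and f: "Cp_on p V f" and d: "mdeg \<beta> + mdeg \<delta> \<le> p" and x: "x \<in> V"
  shows "mderiv \<delta> (mderiv \<beta> f) x = mderiv (\<beta> + \<delta>) f x"
proof -
  have "mderiv \<delta> (mderiv \<beta> f) x = pdl (mindex_list \<delta> @ mindex_list \<beta>) f x"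
    by (simp add: mderiv_eq_pdl pdl_append)
  also have "\<dots> = pdl (mindex_list (\<beta> + \<delta>)) f x"
  proof (rule pdl_mset_cong[OF V f, rule_format, OF _ _ x])
    show "length (mindex_list \<delta> @ mindex_list \<beta>) \<le> p" using d by (simp add: length_mindex_list)
    show "mset (mindex_list \<delta> @ mindex_list \<beta>) = mset (mindex_list (\<beta> + \<delta>))"
      by (simp add: multiset_eq_iff count_mindex_list)
  qed
  finally show ?thesis by (simp add: mderiv_eq_pdl)
qed

lemma mderiv_partial:
  fixes f :: "real^'n::finite \<Rightarrow> real"
  assumes V: "open V" and f: "Cp_on p V f" and d: "mdeg \<delta> + 1 \<le> p" and x: "x \<in> V"
  shows "mderiv \<delta> (partial i f) x = mderiv (\<delta> + munit i) f x"
proof -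
  have "mderiv \<delta> (partial i f) x = pdl (mindex_list \<delta> @ [i]) f x"
    by (simp add: mderiv_eq_pdl pdl_append)
  also have "\<dots> = pdl (mindex_list (\<delta> + munit i)) f x"
  proof (rule pdl_mset_cong[OF V f, rule_format, OF _ _ x])
    show "length (mindex_list \<delta> @ [i]) \<le> p" using d by (simp add: length_mindex_list)
    show "mset (mindex_list \<delta> @ [i]) = mset (mindex_list (\<delta> + munit i))"
      by (simp add: multiset_eq_iff count_mindex_list munit_def)
  qed
  finally show ?thesis by (simp add: mderiv_eq_pdl)
qed

lemma Cp_mderiv:
  fixes f :: "real^'n::finite \<Rightarrow> real"
  assumes "Cp_on p V f" "mdeg \<beta> \<le> p"
  shows "Cp_on (p - mdeg \<beta>) V (mderiv \<beta> f)"
  using Cp_pdl[OF assms(1), of "mindex_list \<beta>"] assms(2) by (simp add: mderiv_eq_pdl length_mindex_list)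

lemma continuous_on_mderiv:
  fixes f :: "real^'n::finite \<Rightarrow> real"
  assumes "Cp_on p V f" "mdeg \<beta> \<le> p"
  shows "continuous_on V (mderiv \<beta> f)"
  using Cp_imp_continuous_on[OF Cp_mderiv[OF assms]] .

lemma mderiv_scale:
  assumes "open V" "Cp_on p V f" "mdeg \<beta> \<le> p" "x \<in> V"
  shows "mderiv \<beta> (\<lambda>z. r * f z) x = r * mderiv \<beta> f x"
  using pdl_scale[OF assms(1-2), where l="mindex_list \<beta>" and x=x and r=r] assms(3,4) by (simp add: mderiv_eq_pdl length_mindex_list)

lemma mderiv_sum:
  assumes "open V" "finite S" "\<And>s. s \<in> S \<Longrightarrow> Cp_on p V (F s)" "mdeg \<beta> \<le> p" "x \<in> V"
  shows "mderiv \<beta> (\<lambda>z. \<Sum>s\<in>S. F s z) x = (\<Sum>s\<in>S. mderiv \<beta> (F s) x)"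
  using pdl_sum[OF assms(1-3), where l="mindex_list \<beta>" and x=x] assms(4,5) by (simp add: mderiv_eq_pdl length_mindex_list)

section \<open>Taylor's theorem with a uniform little-o remainder\<close>

lemma ex_uniform_radius:
  fixes P :: "'i::finite \<Rightarrow> 'a::real_normed_vector \<Rightarrow> 'a \<Rightarrow> bool"
  assumes "\<And>i. \<exists>d>0. \<forall>x y. norm (x - b0) < d \<longrightarrow> norm (y - b0) < d \<longrightarrow> P i x y"
  shows "\<exists>d>0. \<forall>i x y. norm (x - b0) < d \<longrightarrow> norm (y - b0) < d \<longrightarrow> P i x y"
proof -
  have "\<forall>i. \<exists>d>0. \<forall>x y. norm (x - b0) < d \<longrightarrow> norm (y - b0) < d \<longrightarrow> P i x y" using assms by blast
  from choice[OF this] obtain D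
    where D: "\<And>i. D i > 0 \<and> (\<forall>x y. norm (x - b0) < D i \<longrightarrow> norm (y - b0) < D i \<longrightarrow> P i x y)"
    by blast
  define d where "d = Min (range D)"
  have "d \<in> range D" unfolding d_def by (intro Min_in) auto
  hence "d > 0" using D by auto
  moreover have "P i x y" if "norm (x - b0) < d" "norm (y - b0) < d" for i x y
  proof -
    have "d \<le> D i" unfolding d_def by (intro Min_le) auto
    thus ?thesis using D[of i] that by auto
  qed
  ultimately show ?thesis by blast
qed

lemma continuous_on_small_oscillation:
  fixes h :: "'a::real_normed_vector \<Rightarrow> real"
  assumes V: "open V" and h: "continuous_on V h" and b0: "b0 \<in> V" and \<epsilon>: "\<epsilon> > 0"
  shows "\<exists>\<delta>>0. \<forall>x y. norm (x - b0) < \<delta> \<longrightarrow> norm (y - b0) < \<delta> \<longrightarrow> \<bar>h y - h x\<bar> \<le> \<epsilon>"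
proof -
  obtain d where d: "d > 0" "\<And>z. z \<in> V \<Longrightarrow> dist z b0 < d \<Longrightarrow> dist (h z) (h b0) < \<epsilon> / 2"
    using h b0 \<epsilon> unfolding continuous_on_iff by (metis half_gt_zero)
  obtain r where r: "r > 0" "ball b0 r \<subseteq> V" using V b0 openE by blast
  have "\<bar>h y - h x\<bar> \<le> \<epsilon>" if "norm (x - b0) < min d r" "norm (y - b0) < min d r" for x y
  proof -
    have "x \<in> V" "y \<in> V" using r that by (auto simp: dist_norm norm_minus_commute)
    hence "dist (h x) (h b0) < \<epsilon> / 2" "dist (h y) (h b0) < \<epsilon> / 2"
      using d(2) that by (auto simp: dist_norm)
    thus ?thesis unfolding dist_real_def by arith
  qed
  thus ?thesis using d r by (intro exI[of _ "min d r"]) auto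
qed

lemma taylor_at_center:
  fixes h :: "real^'n::finite \<Rightarrow> real"
  shows "taylor q x h x = h x"
proof -
  have "taylor q x h x = (\<Sum>\<beta>::'n\<Rightarrow>nat\<in>{\<beta>. mdeg \<beta> \<le> q}. if \<beta> = 0 then h x else 0)"
    unfolding taylor_def by (intro sum.cong) (auto simp: zero_mpow)
  also have "\<dots> = h x" by (subst sum.delta[OF finite_mdeg_le]) simp
  finally show ?thesis .
qed

lemma taylor_order_0:
  fixes h :: "real^'n::finite \<Rightarrow> real"
  shows "taylor 0 x h y = h x"
proof -
  have "{\<beta>::'n\<Rightarrow>nat. mdeg \<beta> \<le> 0} = {0}" using mdeg_eq_0_iff by auto
  thus ?thesis unfolding taylor_def by simp
qed

lemma mfact_add_munit: "mfact (\<delta> + munit i) = mfact \<delta> * (\<delta> i + 1)"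
proof -
  let ?P = "\<Prod>k\<in>UNIV-{i}. fact (\<delta> k) :: nat"
  have "mfact (\<delta> + munit i) = fact ((\<delta> + munit i) i) * (\<Prod>k\<in>UNIV-{i}. fact ((\<delta> + munit i) k))"
    unfolding mfact_def by (rule prod.remove) auto
  also have "(\<Prod>k\<in>UNIV-{i}. fact ((\<delta> + munit i) k)) = ?P"
    by (intro prod.cong) (auto simp: munit_def)
  also have "(\<delta> + munit i) i = \<delta> i + 1" by (simp add: munit_def)
  finally have "mfact (\<delta> + munit i) = fact (\<delta> i + 1) * ?P" .
  moreover have "mfact \<delta> = fact (\<delta> i) * ?P"
    unfolding mfact_def by (rule prod.remove) auto
  ultimately show ?thesis by (simp add: algebra_simps)
qed

lemma mpow_remove: "mpow v \<gamma> = (v $ i) ^ \<gamma> i * (\<Prod>k\<in>UNIV - {i}. (v $ k) ^ \<gamma> k)"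
  unfolding mpow_def by (rule prod.remove) auto

lemma has_real_derivative_mpow_axis:
  fixes z x :: "real^'n::finite"
  shows "((\<lambda>t. mpow (z + t *\<^sub>R axis i 1 - x) \<gamma>) has_real_derivative
           real (\<gamma> i) * mpow (z - x) (\<gamma> - munit i)) (at 0)"
proof -
  let ?C = "\<Prod>k\<in>UNIV - {i}. ((z - x) $ k) ^ \<gamma> k"
  have "(\<Prod>k\<in>UNIV - {i}. ((z + t *\<^sub>R axis i 1 - x) $ k) ^ \<gamma> k) = ?C"
    and "(z + t *\<^sub>R axis i 1 - x) $ i = (z - x) $ i + t" for t
    by (intro prod.cong) (auto simp: axis_def)
  hence line: "mpow (z + t *\<^sub>R axis i 1 - x) \<gamma> = ((z - x) $ i + t) ^ \<gamma> i * ?C" for t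
    by (simp only: mpow_remove[of _ _ i])
  have "(\<Prod>k\<in>UNIV - {i}. ((z - x) $ k) ^ (\<gamma> - munit i) k) = ?C"
    by (intro prod.cong) (auto simp: munit_def)
  moreover have "(\<gamma> - munit i) i = \<gamma> i - 1" by (simp add: munit_def)
  ultimately have val: "mpow (z - x) (\<gamma> - munit i) = ((z - x) $ i) ^ (\<gamma> i - 1) * ?C"
    by (simp only: mpow_remove[of _ _ i])
  have "((\<lambda>t. ((z - x) $ i + t) ^ \<gamma> i * ?C) has_real_derivative
          (real (\<gamma> i) * ((z - x) $ i + 0) ^ (\<gamma> i - 1) * 1) * ?C) (at 0)"
    by (intro DERIV_mult DERIV_pow DERIV_const derivative_eq_intros) auto
  thus ?thesis unfolding line val by (simp add: mult_ac)
qed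

lemma sum_mdeg_le_Suc_reindex:
  fixes c :: "('n::finite \<Rightarrow> nat) \<Rightarrow> real"
  shows "(\<Sum>\<gamma>\<in>{\<gamma>. mdeg \<gamma> \<le> Suc q}. c \<gamma> / real (mfact \<gamma>) * (real (\<gamma> i) * mpow w (\<gamma> - munit i)))
       = (\<Sum>\<delta>\<in>{\<delta>. mdeg \<delta> \<le> q}. c (\<delta> + munit i) / real (mfact \<delta>) * mpow w \<delta>)"
proof -
  let ?F = "\<lambda>\<gamma>. c \<gamma> / real (mfact \<gamma>) * (real (\<gamma> i) * mpow w (\<gamma> - munit i))"
  have "?F \<gamma> = 0" if "\<gamma> \<in> {\<gamma>. mdeg \<gamma> \<le> Suc q} - (\<lambda>\<delta>. \<delta> + munit i) ` {\<delta>. mdeg \<delta> \<le> q}" for \<gamma>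
  proof -
    have "\<gamma> i = 0"
    proof (rule ccontr)
      assume "\<gamma> i \<noteq> 0"
      hence "\<gamma> = (\<gamma> - munit i) + munit i" "munit i \<le> \<gamma>"
        by (auto simp: fun_eq_iff le_fun_def munit_def)
      moreover have "mdeg (\<gamma> - munit i) \<le> q" using that mdeg_diff[OF calculation(2)] by auto
      ultimately show False using that by blast
    qed
    thus ?thesis by simp
  qed
  hence "(\<Sum>\<gamma>\<in>{\<gamma>. mdeg \<gamma> \<le> Suc q}. ?F \<gamma>) = (\<Sum>\<gamma>\<in>(\<lambda>\<delta>. \<delta> + munit i) ` {\<delta>. mdeg \<delta> \<le> q}. ?F \<gamma>)"
    by (intro sum.mono_neutral_right finite_mdeg_le) (auto simp: mdeg_add)
  also have "\<dots> = (\<Sum>\<delta>\<in>{\<delta>. mdeg \<delta> \<le> q}. ?F (\<delta> + munit i))"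
    by (subst sum.reindex) (auto simp: inj_on_def fun_eq_iff o_def)
  also have "\<dots> = (\<Sum>\<delta>\<in>{\<delta>. mdeg \<delta> \<le> q}. c (\<delta> + munit i) / real (mfact \<delta>) * mpow w \<delta>)"
  proof (rule sum.cong[OF refl])
    fix \<delta> :: "'n \<Rightarrow> nat"
    have X: "(\<delta> + munit i) i = \<delta> i + 1" and Y: "\<delta> + munit i - munit i = \<delta>"
      by (auto simp: fun_eq_iff munit_def)
    have M: "real (mfact (\<delta> + munit i)) = real (mfact \<delta>) * (real (\<delta> i) + 1)"
      by (simp add: mfact_add_munit algebra_simps)
    have nz: "real (\<delta> i) + 1 \<noteq> 0" by linarith
    have cancel: "a \<noteq> 0 \<Longrightarrow> M' \<noteq> 0 \<Longrightarrow> C / (M' * a) * (a * m) = C / M' * m" for a M' C m :: real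
      by (simp add: field_simps)
    show "?F (\<delta> + munit i) = c (\<delta> + munit i) / real (mfact \<delta>) * mpow w \<delta>"
      by (simp only: X Y M of_nat_add of_nat_1) (rule cancel[OF nz mfact_neq_0])
  qed
  finally show ?thesis .
qed

lemma has_real_derivative_taylor_axis:
  fixes h :: "real^'n::finite \<Rightarrow> real"
  assumes V: "open V" and h: "Cp_on (Suc q) V h" and x: "x \<in> V"
  shows "((\<lambda>t. taylor (Suc q) x h (z + t *\<^sub>R axis i 1)) has_real_derivative taylor q x (partial i h) z) (at 0)"
proof -
  have "((\<lambda>t. taylor (Suc q) x h (z + t *\<^sub>R axis i 1)) has_real_derivative
     (\<Sum>\<gamma>\<in>{\<gamma>. mdeg \<gamma> \<le> Suc q}. mderiv \<gamma> h x / real (mfact \<gamma>) * (real (\<gamma> i) * mpow (z - x) (\<gamma> - munit i)))) (at 0)"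
    unfolding taylor_def by (intro DERIV_sum DERIV_cmult has_real_derivative_mpow_axis)
  also have "(\<Sum>\<gamma>\<in>{\<gamma>. mdeg \<gamma> \<le> Suc q}. mderiv \<gamma> h x / real (mfact \<gamma>) * (real (\<gamma> i) * mpow (z - x) (\<gamma> - munit i)))
     = (\<Sum>\<delta>\<in>{\<delta>. mdeg \<delta> \<le> q}. mderiv (\<delta> + munit i) h x / real (mfact \<delta>) * mpow (z - x) \<delta>)"
    by (rule sum_mdeg_le_Suc_reindex)
  also have "\<dots> = taylor q x (partial i h) z"
    unfolding taylor_def by (intro sum.cong refl) (use mderiv_partial[OF V h _ x] in auto)
  finally show ?thesis .
qed

definition in_box :: "real^'n::finite \<Rightarrow> real^'n \<Rightarrow> real^'n \<Rightarrow> bool" where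
  "in_box x y z \<longleftrightarrow> (\<forall>k. (x$k \<le> z$k \<and> z$k \<le> y$k) \<or> (y$k \<le> z$k \<and> z$k \<le> x$k))"

lemma in_box_axis_path:
  assumes "i \<notin> A" and "0 \<le> s \<and> s \<le> y$i - x$i \<or> y$i - x$i \<le> s \<and> s \<le> 0"
  shows "in_box x y ((\<chi> k. if k \<in> A then y$k else x$k) + s *\<^sub>R axis i 1)"
  using assms unfolding in_box_def by (auto simp: axis_def)

text \<open>The mean value theorem, applied once per coordinate along a path from \<open>x\<close> to \<open>y\<close>
  that changes one coordinate at a time.\<close>

lemma mvt_along_axes:
  fixes F :: "real^'n::finite \<Rightarrow> real" and F' :: "'n \<Rightarrow> real^'n \<Rightarrow> real"
  assumes der: "\<And>z i. in_box x y z \<Longrightarrow> ((\<lambda>t. F (z + t *\<^sub>R axis i 1)) has_real_derivative F' i z) (at 0)"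
      and bnd: "\<And>z i. in_box x y z \<Longrightarrow> \<bar>F' i z\<bar> \<le> B"
  shows "\<bar>F y - F x\<bar> \<le> B * (\<Sum>k\<in>UNIV. \<bar>y$k - x$k\<bar>)"
proof -
  define w where "w A = (\<chi> k. if k \<in> A then y$k else x$k)" for A
  have partial_path: "\<bar>F (w A) - F x\<bar> \<le> B * (\<Sum>k\<in>A. \<bar>y$k - x$k\<bar>)" if "finite A" for A
    using that
  proof (induction A rule: finite_induct)
    case empty
    have "w {} = x" by (simp add: w_def vec_eq_iff)
    thus ?case by simp
  next
    case (insert i A)
    define t where "t = y$i - x$i"
    have box: "in_box x y (w A + s *\<^sub>R axis i 1)" if "0 \<le> s \<and> s \<le> t \<or> t \<le> s \<and> s \<le> 0" for s
      using in_box_axis_path[OF insert.hyps(2)] that unfolding w_def t_def by blast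
    have "\<exists>s. (0 \<le> s \<and> s \<le> t \<or> t \<le> s \<and> s \<le> 0) \<and>
            F (w A + t *\<^sub>R axis i 1) - F (w A + 0 *\<^sub>R axis i 1) = t * F' i (w A + s *\<^sub>R axis i 1)"
      by (rule mvt_signed, rule has_real_derivative_axis_shift, rule der[OF box])
    then obtain s where s: "0 \<le> s \<and> s \<le> t \<or> t \<le> s \<and> s \<le> 0"
      and eq: "F (w A + t *\<^sub>R axis i 1) - F (w A) = t * F' i (w A + s *\<^sub>R axis i 1)" by auto
    have "w (insert i A) = w A + t *\<^sub>R axis i 1"
      using insert.hyps by (auto simp: w_def vec_eq_iff axis_def t_def)
    hence "\<bar>F (w (insert i A)) - F (w A)\<bar> = \<bar>t\<bar> * \<bar>F' i (w A + s *\<^sub>R axis i 1)\<bar>"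
      using eq by (simp add: abs_mult)
    also have "\<dots> \<le> \<bar>t\<bar> * B" by (rule mult_left_mono[OF bnd[OF box[OF s]]]) simp
    finally have "\<bar>F (w (insert i A)) - F (w A)\<bar> \<le> \<bar>t\<bar> * B" .
    hence "\<bar>F (w (insert i A)) - F x\<bar> \<le> \<bar>t\<bar> * B + B * (\<Sum>k\<in>A. \<bar>y$k - x$k\<bar>)"
      using insert.IH by linarith
    thus ?case using insert.hyps by (simp add: t_def algebra_simps)
  qed
  have "w UNIV = y" by (simp add: w_def vec_eq_iff)
  thus ?thesis using partial_path[of UNIV] by simp
qed

lemma real_card_ge_1: "real CARD('n::finite) \<ge> 1"
proof -
  have "CARD('n) > 0" by (simp add: finite_UNIV_card_ge_0)
  thus ?thesis by linarith
qed

lemma sum_abs_components_le: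
  fixes v :: "real^'n::finite"
  shows "(\<Sum>k\<in>UNIV. \<bar>v$k\<bar>) \<le> real CARD('n) * norm v"
  using sum_mono[of UNIV "\<lambda>k. \<bar>v$k\<bar>" "\<lambda>_. norm v"] component_le_norm_cart[of v] by simp

lemma in_box_norm_le:
  assumes "in_box x y z"
  shows "norm (z - x) \<le> norm (y - x)"
proof (rule norm_le_componentwise_cart)
  show "norm ((z - x)$k) \<le> norm ((y - x)$k)" for k
    using assms[unfolded in_box_def, rule_format, of k] by auto
qed

lemma in_box_near:
  fixes x y z b0 :: "real^'m::finite"
  assumes x: "norm (x - b0) < \<delta>" and y: "norm (y - b0) < \<delta>" and z: "in_box x y z"
  shows "norm (z - b0) < real CARD('m) * \<delta>"
proof -
  have "\<bar>(z - b0)$k\<bar> < \<delta>" for k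
    using component_le_norm_cart[of "x - b0" k] component_le_norm_cart[of "y - b0" k] x y z
    unfolding in_box_def by (smt (verit) vector_minus_component)
  hence "(\<Sum>k\<in>UNIV. \<bar>(z - b0)$k\<bar>) < (\<Sum>k\<in>(UNIV::'m set). \<delta>)"
    by (intro sum_strict_mono) auto
  thus ?thesis using norm_le_l1_cart[of "z - b0"] by simp
qed

lemma taylor_remainder_Suc_le:
  fixes h :: "real^'n::finite \<Rightarrow> real"
  assumes V: "open V" and h: "Cp_on (Suc q) V h" and "B \<ge> 0"
    and box: "\<And>z. in_box x y z \<Longrightarrow> z \<in> V"
    and R': "\<And>i z. in_box x y z \<Longrightarrow> \<bar>partial i h z - taylor q x (partial i h) z\<bar> \<le> B * norm (z - x) ^ q"
  shows "\<bar>h y - taylor (Suc q) x h y\<bar> \<le> real CARD('n) * B * norm (y - x) ^ Suc q"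
proof -
  have x: "x \<in> V" by (rule box) (auto simp: in_box_def)
  define R where "R z = h z - taylor (Suc q) x h z" for z
  have "\<bar>R y - R x\<bar> \<le> (B * norm (y - x) ^ q) * (\<Sum>k\<in>UNIV. \<bar>y$k - x$k\<bar>)"
  proof (rule mvt_along_axes)
    fix z i assume z: "in_box x y z"
    show "((\<lambda>t. R (z + t *\<^sub>R axis i 1)) has_real_derivative
            partial i h z - taylor q x (partial i h) z) (at 0)"
      unfolding R_def using Cp_SucD(2)[OF h box[OF z]]
      by (intro DERIV_diff has_real_derivative_partial has_real_derivative_taylor_axis[OF V h x])
    have "B * norm (z - x) ^ q \<le> B * norm (y - x) ^ q"
      using in_box_norm_le[OF z] \<open>B \<ge> 0\<close> by (intro mult_left_mono power_mono) auto
    thus "\<bar>partial i h z - taylor q x (partial i h) z\<bar> \<le> B * norm (y - x) ^ q"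
      by (rule order_trans[OF R'[OF z]])
  qed
  also have "\<dots> \<le> (B * norm (y - x) ^ q) * (real CARD('n) * norm (y - x))"
    using sum_abs_components_le[of "y - x"] \<open>B \<ge> 0\<close> by (intro mult_left_mono) auto
  finally show ?thesis by (simp add: R_def taylor_at_center algebra_simps)
qed

lemma taylor_remainder_little_o:
  fixes h :: "real^'n::finite \<Rightarrow> real"
  assumes V: "open V" and b0: "b0 \<in> V"
  shows "Cp_on q V h \<Longrightarrow> \<epsilon> > 0 \<Longrightarrow> \<exists>\<delta>>0. \<forall>x y. norm (x - b0) < \<delta> \<longrightarrow> norm (y - b0) < \<delta> \<longrightarrow>
            \<bar>h y - taylor q x h y\<bar> \<le> \<epsilon> * norm (y - x) ^ q"
proof (induction q arbitrary: h \<epsilon>)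
  case 0
  show ?case
    using continuous_on_small_oscillation[OF V Cp_imp_continuous_on[OF "0.prems"(1)] b0 "0.prems"(2)]
    by (simp add: taylor_order_0)
next
  case (Suc q)
  let ?N = "real CARD('n)"
  have N: "?N \<ge> 1" by (rule real_card_ge_1)
  have "\<exists>D>0. \<forall>i x y. norm (x - b0) < D \<longrightarrow> norm (y - b0) < D \<longrightarrow>
            \<bar>partial i h y - taylor q x (partial i h) y\<bar> \<le> \<epsilon> / ?N * norm (y - x) ^ q"
    by (intro ex_uniform_radius Suc.IH[OF Cp_SucD(3)[OF Suc.prems(1)]]) (use Suc.prems(2) N in simp)
  then obtain D where D: "D > 0" and DD: "\<And>i x y. norm (x - b0) < D \<Longrightarrow> norm (y - b0) < D \<Longrightarrow>
            \<bar>partial i h y - taylor q x (partial i h) y\<bar> \<le> \<epsilon> / ?N * norm (y - x) ^ q" by blast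
  obtain r where r: "r > 0" "ball b0 r \<subseteq> V" using V b0 openE by blast
  define \<delta> where "\<delta> = min r D / ?N"
  have N\<delta>: "?N * \<delta> = min r D" and \<delta>: "\<delta> > 0" using r D N unfolding \<delta>_def by auto
  have "1 * \<delta> \<le> ?N * \<delta>" using N \<delta> by (intro mult_right_mono) auto
  hence \<delta>: "\<delta> > 0" "?N * \<delta> \<le> r" "?N * \<delta> \<le> D" "\<delta> \<le> D" using N\<delta> \<delta> by auto
  have "\<bar>h y - taylor (Suc q) x h y\<bar> \<le> \<epsilon> * norm (y - x) ^ Suc q"
    if x: "norm (x - b0) < \<delta>" and y: "norm (y - b0) < \<delta>" for x y
  proof -
    have z: "z \<in> V \<and> norm (z - b0) < D" if "in_box x y z" for z
      using in_box_near[OF x y that] \<delta> r by (auto simp: dist_norm norm_minus_commute)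
    have "\<bar>h y - taylor (Suc q) x h y\<bar> \<le> ?N * (\<epsilon> / ?N) * norm (y - x) ^ Suc q"
      using Suc.prems(2) x \<delta> z DD
      by (intro taylor_remainder_Suc_le[OF V Suc.prems(1)]) auto
    thus ?thesis using N by simp
  qed
  thus ?case using \<delta>(1) by blast
qed

section \<open>Convergence of the pushed-forward functionals\<close>

lemma sum_mdeg_le_ge_reindex:
  fixes F :: "('n::finite \<Rightarrow> nat) \<Rightarrow> real"
  assumes "mdeg \<beta> \<le> p"
  shows "(\<Sum>\<gamma>\<in>{\<gamma>. mdeg \<gamma> \<le> p \<and> \<beta> \<le> \<gamma>}. F \<gamma>) = (\<Sum>\<delta>\<in>{\<delta>. mdeg \<delta> \<le> p - mdeg \<beta>}. F (\<beta> + \<delta>))"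
proof (rule sum.reindex_bij_witness[where j="\<lambda>\<gamma>. \<gamma> - \<beta>" and i="\<lambda>\<delta>. \<beta> + \<delta>"])
  fix \<gamma> :: "'n \<Rightarrow> nat" assume g: "\<gamma> \<in> {\<gamma>. mdeg \<gamma> \<le> p \<and> \<beta> \<le> \<gamma>}"
  show \<gamma>: "\<beta> + (\<gamma> - \<beta>) = \<gamma>" using g by (auto simp: fun_eq_iff le_fun_def)
  show "\<gamma> - \<beta> \<in> {\<delta>. mdeg \<delta> \<le> p - mdeg \<beta>}" using g mdeg_diff[of \<beta> \<gamma>] by auto
  show "F (\<beta> + (\<gamma> - \<beta>)) = F \<gamma>" by (simp only: \<gamma>)
next
  fix \<delta> :: "'n \<Rightarrow> nat" assume "\<delta> \<in> {\<delta>. mdeg \<delta> \<le> p - mdeg \<beta>}"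
  thus "\<beta> + \<delta> - \<beta> = \<delta>" "\<beta> + \<delta> \<in> {\<gamma>. mdeg \<gamma> \<le> p \<and> \<beta> \<le> \<gamma>}"
    using assms by (auto simp: fun_eq_iff mdeg_add le_fun_def)
qed

lemma taylor_mderiv:
  fixes g :: "real^'m::finite \<Rightarrow> real"
  assumes V: "open V" and g: "Cp_on p V g" and x: "x \<in> V" and \<beta>: "mdeg \<beta> \<le> p"
  shows "taylor (p - mdeg \<beta>) x (mderiv \<beta> g) y =
     (\<Sum>\<gamma>\<in>{\<gamma>. mdeg \<gamma> \<le> p \<and> \<beta> \<le> \<gamma>}. mderiv \<gamma> g x * (mpow (y - x) (\<gamma> - \<beta>) / real (mfact (\<gamma> - \<beta>))))"
proof -
  have "mderiv \<delta> (mderiv \<beta> g) x = mderiv (\<beta> + \<delta>) g x" if "mdeg \<delta> \<le> p - mdeg \<beta>" for \<delta>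
    using that \<beta> by (intro mderiv_mderiv[OF V g _ x]) auto
  moreover have "\<beta> + \<delta> - \<beta> = \<delta>" for \<delta> :: "'m \<Rightarrow> nat" by (auto simp: fun_eq_iff)
  ultimately show ?thesis
    unfolding taylor_def sum_mdeg_le_ge_reindex[OF \<beta>] by (intro sum.cong) auto
qed

text \<open>Re-expanding the monomials centred at \<open>x\<close> around \<open>y\<close> turns the coefficients of a Taylor
  polynomial into Taylor polynomials of the derivatives.\<close>

lemma pdual_taylor_recenter:
  fixes g :: "real^'m::finite \<Rightarrow> real"
  assumes V: "open V" and g: "Cp_on p V g" and x: "x \<in> V" and \<zeta>: "\<zeta> \<in> pdual p"
  shows "\<zeta> (taylor p x g) = (\<Sum>\<beta>\<in>{\<beta>. mdeg \<beta> \<le> p}. zcomp \<zeta> y \<beta> * taylor (p - mdeg \<beta>) x (mderiv \<beta> g) y)"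
proof -
  let ?S = "{\<beta>::'m\<Rightarrow>nat. mdeg \<beta> \<le> p}"
  let ?T = "\<lambda>\<gamma> \<beta>. if \<beta> \<le> \<gamma> then mderiv \<gamma> g x * (mpow (y - x) (\<gamma> - \<beta>) / real (mfact (\<gamma> - \<beta>))) * zcomp \<zeta> y \<beta> else 0"
  have "mderiv \<gamma> g x * zcomp \<zeta> x \<gamma> = (\<Sum>\<beta>\<in>?S. ?T \<gamma> \<beta>)" if "\<gamma> \<in> ?S" for \<gamma>
  proof -
    have "{\<beta>. \<beta> \<le> \<gamma>} = {\<beta>\<in>?S. \<beta> \<le> \<gamma>}" using that by (auto dest: mdeg_mono)
    hence "mderiv \<gamma> g x * zcomp \<zeta> x \<gamma> = (\<Sum>\<beta>\<in>{\<beta>\<in>?S. \<beta> \<le> \<gamma>}.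
             mderiv \<gamma> g x * (mpow (y - x) (\<gamma> - \<beta>) / real (mfact (\<gamma> - \<beta>))) * zcomp \<zeta> y \<beta>)"
      using that by (simp add: zcomp_recenter[OF \<zeta>, of \<gamma> x y] sum_distrib_left mult.assoc)
    also have "\<dots> = (\<Sum>\<beta>\<in>?S. ?T \<gamma> \<beta>)" by (rule sum.inter_filter[OF finite_mdeg_le])
    finally show ?thesis .
  qed
  hence "\<zeta> (taylor p x g) = (\<Sum>\<gamma>\<in>?S. \<Sum>\<beta>\<in>?S. ?T \<gamma> \<beta>)"
    by (simp add: pdual_taylor[OF \<zeta>])
  also have "\<dots> = (\<Sum>\<beta>\<in>?S. \<Sum>\<gamma>\<in>?S. ?T \<gamma> \<beta>)" by (rule sum.swap)
  also have "\<dots> = (\<Sum>\<beta>\<in>?S. zcomp \<zeta> y \<beta> * taylor (p - mdeg \<beta>) x (mderiv \<beta> g) y)"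
  proof (rule sum.cong[OF refl])
    fix \<beta> assume \<beta>: "\<beta> \<in> ?S"
    have "{\<gamma>\<in>?S. \<beta> \<le> \<gamma>} = {\<gamma>. mdeg \<gamma> \<le> p \<and> \<beta> \<le> \<gamma>}" by auto
    thus "(\<Sum>\<gamma>\<in>?S. ?T \<gamma> \<beta>) = zcomp \<zeta> y \<beta> * taylor (p - mdeg \<beta>) x (mderiv \<beta> g) y"
      using \<beta> by (simp add: taylor_mderiv[OF V g x] sum.inter_filter[OF finite_mdeg_le, symmetric]
          sum_distrib_left mult_ac)
  qed
  finally show ?thesis .
qed

lemma pdual_taylor_diff:
  fixes g :: "real^'m::finite \<Rightarrow> real"
  assumes V: "open V" and g: "Cp_on p V g" and x: "x \<in> V" and \<zeta>: "\<zeta> \<in> pdual p"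
  shows "\<zeta> (taylor p a g) - \<zeta> (taylor p x g) = (\<Sum>\<beta>\<in>{\<beta>. mdeg \<beta> \<le> p}.
           zcomp \<zeta> a \<beta> * (mderiv \<beta> g a - taylor (p - mdeg \<beta>) x (mderiv \<beta> g) a))"
proof -
  have "\<zeta> (taylor p x g) = (\<Sum>\<beta>\<in>{\<beta>. mdeg \<beta> \<le> p}. zcomp \<zeta> a \<beta> * taylor (p - mdeg \<beta>) x (mderiv \<beta> g) a)"
    by (rule pdual_taylor_recenter[OF V g x \<zeta>])
  moreover have "\<zeta> (taylor p a g) = (\<Sum>\<beta>\<in>{\<beta>. mdeg \<beta> \<le> p}. zcomp \<zeta> a \<beta> * mderiv \<beta> g a)"
    by (simp add: pdual_taylor[OF \<zeta>] mult.commute)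
  ultimately show ?thesis by (simp add: right_diff_distrib sum_subtractf)
qed

lemma sum_in_pdual:
  assumes "finite I" "\<And>i. i \<in> I \<Longrightarrow> \<zeta> i \<in> pdual p"
  shows "(\<lambda>P. \<Sum>i\<in>I. \<zeta> i P) \<in> pdual p"
  using assms unfolding pdual_def by (auto simp: sum.distrib sum_distrib_left)

lemma tendsto_mpow:
  assumes "(f \<longlongrightarrow> a) F"
  shows "((\<lambda>x. mpow (f x) \<gamma>) \<longlongrightarrow> mpow a \<gamma>) F"
  unfolding mpow_def by (intro tendsto_prod tendsto_power tendsto_vec_nth assms)

lemma continuous_on_open_tendsto:
  fixes h :: "real^'m::finite \<Rightarrow> real"
  assumes "open V" "continuous_on V h" "b0 \<in> V" "(f \<longlongrightarrow> b0) F"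
  shows "((\<lambda>j. h (f j)) \<longlongrightarrow> h b0) F"
proof -
  have "isCont h b0" using assms(1-3) continuous_on_eq_continuous_at by blast
  thus ?thesis using assms(4) by (rule isCont_tendsto_compose)
qed

lemma tendsto_taylor_center:
  fixes h :: "real^'m::finite \<Rightarrow> real"
  assumes V: "open V" and h: "Cp_on q V h" and y0: "y0 \<in> V" and y: "y \<longlonglongrightarrow> y0"
  shows "(\<lambda>j. taylor q (y j) h w) \<longlonglongrightarrow> taylor q y0 h w"
  unfolding taylor_def
  by (intro tendsto_sum tendsto_mult tendsto_divide tendsto_const tendsto_mpow tendsto_diff y
        continuous_on_open_tendsto[OF V continuous_on_mderiv[OF h] y0]) (auto simp: mfact_pos)

lemma pdual_taylor_tendsto:
  fixes g :: "real^'m::finite \<Rightarrow> real"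
  assumes V: "open V" and g: "Cp_on p V g" and y0: "y0 \<in> V"
    and yV: "\<And>j. y j \<in> V" and y: "y \<longlonglongrightarrow> y0"
    and Z: "\<And>j. Z j \<in> pdual p" and \<zeta>: "\<zeta> \<in> pdual p" and lim: "dual_tendsto p Z \<zeta>"
  shows "(\<lambda>j. Z j (taylor p (y j) g)) \<longlonglongrightarrow> \<zeta> (taylor p y0 g)"
proof -
  have "(\<lambda>j. zcomp (Z j) y0 \<beta>) \<longlonglongrightarrow> zcomp \<zeta> y0 \<beta>" if "mdeg \<beta> \<le> p" for \<beta>
    using lim shifted_monomial_in_polys[OF that] unfolding dual_tendsto_def zcomp_def by blast
  hence "(\<lambda>j. \<Sum>\<beta>\<in>{\<beta>. mdeg \<beta> \<le> p}. zcomp (Z j) y0 \<beta> * taylor (p - mdeg \<beta>) (y j) (mderiv \<beta> g) y0)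
      \<longlonglongrightarrow> (\<Sum>\<beta>\<in>{\<beta>. mdeg \<beta> \<le> p}. zcomp \<zeta> y0 \<beta> * taylor (p - mdeg \<beta>) y0 (mderiv \<beta> g) y0)"
    by (intro tendsto_sum tendsto_mult tendsto_taylor_center[OF V Cp_mderiv[OF g] y0 y]) auto
  thus ?thesis
    by (simp only: pdual_taylor_recenter[OF V g yV Z, where y = y0] pdual_taylor_recenter[OF V g y0 \<zeta>, where y = y0])
qed

lemma zcomp_taylor_remainder_tendsto_0:
  fixes g :: "real^'m::finite \<Rightarrow> real"
  assumes V: "open V" and g: "Cp_on p V g" and b0: "b0 \<in> V" and \<beta>: "mdeg \<beta> \<le> p"
    and a: "a \<longlonglongrightarrow> b0" and x: "x \<longlonglongrightarrow> b0"
    and bnd: "\<And>j. norm (a j - x j) ^ (p - mdeg \<beta>) * \<bar>zcomp (\<zeta> j) (a j) \<beta>\<bar> \<le> c"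
  shows "(\<lambda>j. zcomp (\<zeta> j) (a j) \<beta> * (mderiv \<beta> g (a j) - taylor (p - mdeg \<beta>) (x j) (mderiv \<beta> g) (a j)))
           \<longlonglongrightarrow> 0"
proof (rule tendstoI)
  fix \<epsilon> :: real assume \<epsilon>: "\<epsilon> > 0"
  define \<epsilon>' where "\<epsilon>' = \<epsilon> / (2 * (\<bar>c\<bar> + 1))"
  have "\<bar>c\<bar> + 1 > 0" by simp
  hence "\<epsilon>' * (\<bar>c\<bar> + 1) = \<epsilon> / 2" unfolding \<epsilon>'_def by (simp add: field_simps)
  hence \<epsilon>': "\<epsilon>' > 0" "\<epsilon>' * (\<bar>c\<bar> + 1) < \<epsilon>" using \<epsilon> \<open>\<bar>c\<bar> + 1 > 0\<close>
    unfolding \<epsilon>'_def by auto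
  obtain \<delta> where \<delta>: "\<delta> > 0" and T: "\<And>x y. norm (x - b0) < \<delta> \<Longrightarrow> norm (y - b0) < \<delta> \<Longrightarrow>
      \<bar>mderiv \<beta> g y - taylor (p - mdeg \<beta>) x (mderiv \<beta> g) y\<bar> \<le> \<epsilon>' * norm (y - x) ^ (p - mdeg \<beta>)"
    using taylor_remainder_little_o[OF V b0 Cp_mderiv[OF g \<beta>] \<epsilon>'(1)] by blast
  show "eventually (\<lambda>j. dist (zcomp (\<zeta> j) (a j) \<beta> *
          (mderiv \<beta> g (a j) - taylor (p - mdeg \<beta>) (x j) (mderiv \<beta> g) (a j))) 0 < \<epsilon>) sequentially"
    using tendstoD[OF a \<delta>] tendstoD[OF x \<delta>]
  proof eventually_elim
    case (elim j)
    let ?z = "\<bar>zcomp (\<zeta> j) (a j) \<beta>\<bar>" and ?n = "norm (a j - x j) ^ (p - mdeg \<beta>)"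
    have "\<bar>mderiv \<beta> g (a j) - taylor (p - mdeg \<beta>) (x j) (mderiv \<beta> g) (a j)\<bar> \<le> \<epsilon>' * ?n"
      using T elim by (simp add: dist_norm)
    hence "?z * \<bar>mderiv \<beta> g (a j) - taylor (p - mdeg \<beta>) (x j) (mderiv \<beta> g) (a j)\<bar> \<le> ?z * (\<epsilon>' * ?n)"
      by (rule mult_left_mono) simp
    also have "\<dots> = \<epsilon>' * (?n * ?z)" by (simp add: mult_ac)
    also have "\<dots> \<le> \<epsilon>' * (\<bar>c\<bar> + 1)" using bnd[of j] \<epsilon>' by (intro mult_left_mono) auto
    finally show ?case using \<epsilon>' by (simp add: abs_mult)
  qed
qed

lemma sum_taylor_functionals_tendsto:
  fixes g :: "real^'m::finite \<Rightarrow> real" and b :: "nat \<Rightarrow> nat \<Rightarrow> real^'m"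
    and \<eta> :: "nat \<Rightarrow> nat \<Rightarrow> (real^'m \<Rightarrow> real) \<Rightarrow> real"
  assumes V: "open V" and g: "Cp_on p V g" and b0: "b0 \<in> V"
    and bV: "\<And>i j. i \<le> k \<Longrightarrow> b i j \<in> V"
    and bconv: "\<And>i. i \<le> k \<Longrightarrow> (\<lambda>j. b i j) \<longlonglongrightarrow> b0"
    and \<eta>: "\<And>i j. i \<le> k \<Longrightarrow> \<eta> i j \<in> pdual p"
    and \<eta>0: "\<eta>0 \<in> pdual p"
    and lim: "dual_tendsto p (\<lambda>j P. \<Sum>i\<le>k. \<eta> i j P) \<eta>0"
    and bnd: "\<And>i j \<beta>. i \<le> k \<Longrightarrow> mdeg \<beta> \<le> p \<Longrightarrow>
                 norm (b i j - b 0 j) ^ (p - mdeg \<beta>) * \<bar>zcomp (\<eta> i j) (b i j) \<beta>\<bar> \<le> c"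
  shows "(\<lambda>j. \<Sum>i\<le>k. \<eta> i j (taylor p (b i j) g)) \<longlonglongrightarrow> \<eta>0 (taylor p b0 g)"
proof -
  define E where "E i \<beta> j = zcomp (\<eta> i j) (b i j) \<beta> *
      (mderiv \<beta> g (b i j) - taylor (p - mdeg \<beta>) (b 0 j) (mderiv \<beta> g) (b i j))" for i \<beta> j
  have "\<eta> i j (taylor p (b i j) g) = \<eta> i j (taylor p (b 0 j) g) + (\<Sum>\<beta>\<in>{\<beta>. mdeg \<beta> \<le> p}. E i \<beta> j)"
    if "i \<le> k" for i j
    using pdual_taylor_diff[OF V g bV[of 0 j] \<eta>[OF that, of j], where a = "b i j"] unfolding E_def by linarith
  hence split: "(\<Sum>i\<le>k. \<eta> i j (taylor p (b i j) g)) =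
      (\<Sum>i\<le>k. \<eta> i j (taylor p (b 0 j) g)) + (\<Sum>i\<le>k. \<Sum>\<beta>\<in>{\<beta>. mdeg \<beta> \<le> p}. E i \<beta> j)" for j
    by (simp add: sum.distrib[symmetric])
  have "(\<lambda>j. \<Sum>i\<le>k. \<eta> i j (taylor p (b 0 j) g)) \<longlonglongrightarrow> \<eta>0 (taylor p b0 g)"
    using bV \<eta> by (intro pdual_taylor_tendsto[OF V g b0 _ bconv[of 0] _ \<eta>0 lim] sum_in_pdual) auto
  moreover have "(\<lambda>j. \<Sum>i\<le>k. \<Sum>\<beta>\<in>{\<beta>. mdeg \<beta> \<le> p}. E i \<beta> j) \<longlonglongrightarrow> (\<Sum>i\<le>k. \<Sum>\<beta>\<in>{\<beta>::'m\<Rightarrow>nat. mdeg \<beta> \<le> p}. 0)"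
    unfolding E_def
    by (intro tendsto_sum zcomp_taylor_remainder_tendsto_0[where c = c, OF V g b0 _ bconv bconv[of 0]] bnd) auto
  ultimately show ?thesis unfolding split using tendsto_add by fastforce
qed

section \<open>Functions vanishing to a given order\<close>

text \<open>Only derivatives of order at most \<open>p\<close> are constrained, since \<open>f\<close> is only assumed \<open>C\<^sup>p\<close>.\<close>

definition vanishes_to_order :: "nat \<Rightarrow> nat \<Rightarrow> (real^'m::finite \<Rightarrow> real) \<Rightarrow> real^'m \<Rightarrow> bool" where
  "vanishes_to_order p r f y \<longleftrightarrow> (\<forall>l. length l < r \<longrightarrow> length l \<le> p \<longrightarrow> pdl l f y = 0)"

lemma vanishes_to_orderD:
  "vanishes_to_order p r f y \<Longrightarrow> length l < r \<Longrightarrow> length l \<le> p \<Longrightarrow> pdl l f y = 0"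
  unfolding vanishes_to_order_def by blast

lemma vanishes_to_orderI:
  "(\<And>l. length l < r \<Longrightarrow> length l \<le> p \<Longrightarrow> pdl l f y = 0) \<Longrightarrow> vanishes_to_order p r f y"
  unfolding vanishes_to_order_def by blast

lemma vanishes_to_order_mono:
  assumes "vanishes_to_order p r f y" "r' \<le> r" "p' \<le> p"
  shows "vanishes_to_order p' r' f y"
  by (rule vanishes_to_orderI, rule vanishes_to_orderD[OF assms(1)]) (use assms in auto)

lemma vanishes_to_order_0: "vanishes_to_order p 0 f y"
  by (rule vanishes_to_orderI) auto

lemma vanishes_to_order_partial:
  "vanishes_to_order (Suc p) r g y \<Longrightarrow> vanishes_to_order p (r - 1) (partial i g) y"
proof (rule vanishes_to_orderI)
  fix l :: "'a list" assume "vanishes_to_order (Suc p) r g y" "length l < r - 1" "length l \<le> p"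
  hence "pdl (l @ [i]) g y = 0" by (intro vanishes_to_orderD) auto
  thus "pdl l (partial i g) y = 0" by (simp add: pdl_append)
qed

lemma pdl_mult_eq_0:
  fixes y :: "real^'m::finite"
  assumes V: "open V" and y: "y \<in> V"
  shows "Cp_on p V f \<Longrightarrow> Cp_on p V g \<Longrightarrow> vanishes_to_order p r f y \<Longrightarrow> vanishes_to_order p s g y
           \<Longrightarrow> length l < r + s \<Longrightarrow> length l \<le> p \<Longrightarrow> pdl l (\<lambda>z. f z * g z) y = 0"
proof (induction l arbitrary: p f g r s rule: rev_induct)
  case Nil
  thus ?case using vanishes_to_orderD[of p r f y "[]"] vanishes_to_orderD[of p s g y "[]"] by fastforce
next
  case (snoc i l)
  then obtain p' where p: "p = Suc p'" by (cases p) auto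
  note f = Cp_SucD[OF snoc.prems(1)[unfolded p]] and g = Cp_SucD[OF snoc.prems(2)[unfolded p]]
  have f': "Cp_on p' V f" and g': "Cp_on p' V g"
    using Cp_mono[of p' p] snoc.prems(1,2) p by auto
  have vf: "vanishes_to_order p' r' f y" if "r' \<le> r" for r'
    using vanishes_to_order_mono[OF snoc.prems(3) that] p by simp
  have vg: "vanishes_to_order p' s' g y" if "s' \<le> s" for s'
    using vanishes_to_order_mono[OF snoc.prems(4) that] p by simp
  have vpf: "vanishes_to_order p' (r - 1) (partial i f) y"
    and vpg: "vanishes_to_order p' (s - 1) (partial i g) y"
    using vanishes_to_order_partial snoc.prems(3,4) p by auto
  have len: "length l < r + s - 1" "length l \<le> p'" using snoc.prems(5,6) p by auto
  have "pdl (l @ [i]) (\<lambda>z. f z * g z) y = pdl l (\<lambda>z. f z * partial i g z + partial i f z * g z) y"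
    using partial_mult(1)[OF f(2) g(2)] by (simp add: pdl_append pdl_cong[OF V _ y])
  also have "\<dots> = pdl l (\<lambda>z. f z * partial i g z) y + pdl l (\<lambda>z. partial i f z * g z) y"
    by (rule pdl_add[OF V Cp_mult[OF V f' g(3)] Cp_mult[OF V f(3) g'] len(2) y])
  also have "pdl l (\<lambda>z. f z * partial i g z) y = 0"
  proof (cases "s = 0")
    case True
    thus ?thesis using len by (intro snoc.IH[OF f' g(3) vf[of "r - 1"] vanishes_to_order_0]) auto
  next
    case False
    thus ?thesis using len by (intro snoc.IH[OF f' g(3) vf[of r] vpg]) auto
  qed
  also have "pdl l (\<lambda>z. partial i f z * g z) y = 0"
  proof (cases "r = 0")
    case True
    thus ?thesis using len by (intro snoc.IH[OF f(3) g' vanishes_to_order_0 vg[of "s - 1"]]) auto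
  next
    case False
    thus ?thesis using len by (intro snoc.IH[OF f(3) g' vpf vg[of s]]) auto
  qed
  finally show ?case by simp
qed

lemma vanishes_to_order_mult:
  fixes y :: "real^'m::finite"
  assumes "open V" "y \<in> V" "Cp_on p V f" "Cp_on p V g"
    and "vanishes_to_order p r f y" "vanishes_to_order p s g y"
  shows "vanishes_to_order p (r + s) (\<lambda>z. f z * g z) y"
  using pdl_mult_eq_0[OF assms(1,2)] assms(3-6) by (blast intro: vanishes_to_orderI)

lemma vanishes_to_order_power:
  fixes y :: "real^'m::finite"
  assumes V: "open V" and y: "y \<in> V" and f: "Cp_on p V f" and v: "vanishes_to_order p r f y"
  shows "vanishes_to_order p (n * r) (\<lambda>z. f z ^ n) y"
proof (induction n)
  case 0 show ?case by (simp add: vanishes_to_order_0)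
next
  case (Suc n)
  have "vanishes_to_order p (r + n * r) (\<lambda>z. f z * f z ^ n) y"
    by (rule vanishes_to_order_mult[OF V y f Cp_power[OF V f] v Suc.IH])
  thus ?case by simp
qed

lemma vanishes_to_order_prod:
  fixes y :: "real^'m::finite"
  assumes V: "open V" and y: "y \<in> V" and S: "finite S"
    and F: "\<And>s. s \<in> S \<Longrightarrow> Cp_on p V (F s)" and v: "\<And>s. s \<in> S \<Longrightarrow> vanishes_to_order p (r s) (F s) y"
  shows "vanishes_to_order p (\<Sum>s\<in>S. r s) (\<lambda>z. \<Prod>s\<in>S. F s z) y"
  using S F v
proof (induction S rule: finite_induct)
  case empty show ?case by (simp add: vanishes_to_order_0)
next
  case (insert s S)
  have "vanishes_to_order p (r s + (\<Sum>s\<in>S. r s)) (\<lambda>z. F s z * (\<Prod>s\<in>S. F s z)) y"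
    by (rule vanishes_to_order_mult[OF V y]) (use insert in \<open>auto intro: Cp_prod[OF V]\<close>)
  thus ?case using insert by simp
qed

lemma vanishes_to_order_scale:
  fixes y :: "real^'m::finite"
  assumes V: "open V" and y: "y \<in> V" and f: "Cp_on p V f" and v: "vanishes_to_order p r f y"
  shows "vanishes_to_order p r (\<lambda>z. c * f z) y"
  using pdl_scale[OF V f _ y] vanishes_to_orderD[OF v] by (auto intro: vanishes_to_orderI)

lemma Cp_map_on_component:
  fixes \<phi> :: "real^'m::finite \<Rightarrow> real^'n::finite"
  assumes "Cp_map_on p V \<phi>"
  shows "Cp_on p V (\<lambda>z. \<phi> z $ k)"
  using assms unfolding Cp_map_on_def by blast

lemma Cp_mpow_comp:
  fixes \<phi> :: "real^'m::finite \<Rightarrow> real^'n::finite"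
  assumes V: "open V" and \<phi>: "Cp_map_on p V \<phi>"
  shows "Cp_on p V (\<lambda>z. mpow (\<phi> z - a) \<alpha>)"
  unfolding mpow_def vector_minus_component
  by (intro Cp_prod[OF V] Cp_power[OF V] Cp_diff[OF V] Cp_map_on_component[OF \<phi>] Cp_const) auto

lemma vanishes_to_order_mpow_comp:
  fixes \<phi> :: "real^'m::finite \<Rightarrow> real^'n::finite"
  assumes V: "open V" and \<phi>: "Cp_map_on p V \<phi>" and y: "y \<in> V"
  shows "vanishes_to_order p (mdeg \<alpha>) (\<lambda>z. mpow (\<phi> z - \<phi> y) \<alpha> / real (mfact \<alpha>)) y"
proof -
  have fac: "Cp_on p V (\<lambda>z. \<phi> z $ k - \<phi> y $ k)" for k
    by (intro Cp_diff[OF V] Cp_map_on_component[OF \<phi>] Cp_const)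
  have "vanishes_to_order p 1 (\<lambda>z. \<phi> z $ k - \<phi> y $ k) y" for k
    by (rule vanishes_to_orderI) simp
  hence "vanishes_to_order p (\<alpha> k) (\<lambda>z. (\<phi> z $ k - \<phi> y $ k) ^ \<alpha> k) y" for k
    using vanishes_to_order_power[OF V y fac, of 1 k "\<alpha> k"] by simp
  hence "vanishes_to_order p (\<Sum>k\<in>UNIV. \<alpha> k) (\<lambda>z. \<Prod>k\<in>UNIV. (\<phi> z $ k - \<phi> y $ k) ^ \<alpha> k) y"
    by (intro vanishes_to_order_prod[OF V y] Cp_power[OF V fac]) auto
  hence "vanishes_to_order p (mdeg \<alpha>)
           (\<lambda>z. inverse (real (mfact \<alpha>)) * (\<Prod>k\<in>UNIV. (\<phi> z $ k - \<phi> y $ k) ^ \<alpha> k)) y"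
    by (intro vanishes_to_order_scale[OF V y]) (auto simp: mdeg_def intro: Cp_prod[OF V] Cp_power[OF V fac])
  thus ?thesis by (simp add: mpow_def divide_inverse mult.commute)
qed

lemma mderiv_mpow_comp_below_order:
  fixes \<phi> :: "real^'m::finite \<Rightarrow> real^'n::finite"
  assumes V: "open V" and \<phi>: "Cp_map_on p V \<phi>" and y: "y \<in> V"
    and "mdeg \<beta> < mdeg \<alpha>" "mdeg \<beta> \<le> p"
  shows "mderiv \<beta> (\<lambda>z. mpow (\<phi> z - \<phi> y) \<alpha> / real (mfact \<alpha>)) y = 0"
  unfolding mderiv_eq_pdl using assms
  by (intro vanishes_to_orderD[OF vanishes_to_order_mpow_comp[OF V \<phi> y]]) (simp_all add: length_mindex_list)

section \<open>Boundedness of the pushed-forward coefficients\<close>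

lemma eventually_bounded_near:
  fixes F :: "real^'m::finite \<Rightarrow> real"
  assumes "open V" "continuous_on V F" "b0 \<in> V"
  shows "eventually (\<lambda>z. z \<in> V \<and> \<bar>F z\<bar> \<le> \<bar>F b0\<bar> + 1) (nhds b0)"
proof -
  have "isCont F b0" using assms continuous_on_eq_continuous_at by blast
  hence "(F \<longlongrightarrow> F b0) (nhds b0)" by (simp add: isCont_def tendsto_at_iff_tendsto_nhds)
  hence "eventually (\<lambda>z. dist (F z) (F b0) < 1) (nhds b0)" by (rule tendstoD) simp
  thus ?thesis using eventually_nhds_in_open[OF assms(1,3)]
    by eventually_elim (auto simp: dist_real_def)
qed

lemma eventually_partials_bounded:
  fixes \<phi> :: "real^'m::finite \<Rightarrow> real^'n::finite"
  assumes V: "open V" and \<phi>: "Cp_map_on (Suc p) V \<phi>" and b0: "b0 \<in> V"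
  shows "\<exists>B. eventually (\<lambda>z. \<forall>k i. z \<in> V \<and> \<bar>partial i (\<lambda>z. \<phi> z $ k) z\<bar> \<le> B k) (nhds b0)"
proof -
  let ?F = "\<lambda>k z. \<phi> z $ k"
  define B where "B k = (\<Sum>i\<in>UNIV. \<bar>partial i (?F k) b0\<bar> + 1)" for k
  have "eventually (\<lambda>z. z \<in> V \<and> \<bar>partial i (?F k) z\<bar> \<le> B k) (nhds b0)" for k i
  proof -
    have B: "\<bar>partial i (?F k) b0\<bar> + 1 \<le> B k" unfolding B_def by (rule member_le_sum) auto
    have "continuous_on V (partial i (?F k))"
      using Cp_imp_continuous_on[OF Cp_SucD(3)[OF Cp_map_on_component[OF \<phi>]]] .
    from eventually_bounded_near[OF V this b0] show ?thesis
      by (rule eventually_mono) (use B in auto)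
  qed
  hence "eventually (\<lambda>z. \<forall>i. z \<in> V \<and> \<bar>partial i (?F k) z\<bar> \<le> B k) (nhds b0)" for k
    by (rule eventually_all_finite)
  hence "eventually (\<lambda>z. \<forall>k i. z \<in> V \<and> \<bar>partial i (?F k) z\<bar> \<le> B k) (nhds b0)"
    by (rule eventually_all_finite)
  thus ?thesis by blast
qed

lemma Cp_map_locally_lipschitz:
  fixes \<phi> :: "real^'m::finite \<Rightarrow> real^'n::finite"
  assumes V: "open V" and \<phi>: "Cp_map_on (Suc p) V \<phi>" and b0: "b0 \<in> V"
  shows "\<exists>L \<delta>. \<delta> > 0 \<and> (\<forall>x y. norm (x - b0) < \<delta> \<longrightarrow> norm (y - b0) < \<delta> \<longrightarrow>
              norm (\<phi> y - \<phi> x) \<le> L * norm (y - x))"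
proof -
  let ?F = "\<lambda>k z. \<phi> z $ k" and ?N = "real CARD('m)"
  have F: "Cp_on (Suc p) V (?F k)" for k by (rule Cp_map_on_component[OF \<phi>])
  obtain B d where d: "d > 0" and near: "\<And>z k i. dist z b0 < d \<Longrightarrow> z \<in> V \<and> \<bar>partial i (?F k) z\<bar> \<le> B k"
    using eventually_partials_bounded[OF V \<phi> b0] unfolding eventually_nhds_metric by blast
  have B: "B k \<ge> 0" for k
  proof -
    have "\<bar>partial undefined (?F k) b0\<bar> \<le> B k" using near[of b0] d by simp
    thus ?thesis by (rule order_trans[OF abs_ge_zero])
  qed
  define \<delta> where "\<delta> = d / ?N"
  have \<delta>: "\<delta> > 0" "?N * \<delta> = d" using d real_card_ge_1[where 'n='m] unfolding \<delta>_def by auto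
  have "norm (\<phi> y - \<phi> x) \<le> (\<Sum>k\<in>UNIV. B k) * ?N * norm (y - x)"
    if x: "norm (x - b0) < \<delta>" and y: "norm (y - b0) < \<delta>" for x y
  proof -
    have "\<bar>?F k y - ?F k x\<bar> \<le> B k * (?N * norm (y - x))" for k
    proof -
      have "\<bar>?F k y - ?F k x\<bar> \<le> B k * (\<Sum>l\<in>UNIV. \<bar>y$l - x$l\<bar>)"
      proof (rule mvt_along_axes)
        fix z i assume "in_box x y z"
        hence "dist z b0 < d" using in_box_near[OF x y] \<delta> by (simp add: dist_norm)
        note z = near[OF this]
        show "((\<lambda>t. ?F k (z + t *\<^sub>R axis i 1)) has_real_derivative partial i (?F k) z) (at 0)"
          using z by (intro has_real_derivative_partial Cp_SucD(2)[OF F]) auto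
        show "\<bar>partial i (?F k) z\<bar> \<le> B k" using z by blast
      qed
      also have "\<dots> \<le> B k * (?N * norm (y - x))"
        using sum_abs_components_le[of "y - x"] B by (intro mult_left_mono) auto
      finally show ?thesis .
    qed
    hence "(\<Sum>k\<in>UNIV. \<bar>(\<phi> y - \<phi> x)$k\<bar>) \<le> (\<Sum>k\<in>UNIV. B k * (?N * norm (y - x)))"
      by (intro sum_mono) simp
    thus ?thesis using norm_le_l1_cart[of "\<phi> y - \<phi> x"] by (simp add: sum_distrib_right mult.assoc)
  qed
  thus ?thesis using \<delta>(1) by (intro exI[of _ "(\<Sum>k\<in>UNIV. B k) * ?N"] exI[of _ \<delta>]) auto
qed

lemma tendsto_Cp_map:
  fixes \<phi> :: "real^'m::finite \<Rightarrow> real^'n::finite"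
  assumes V: "open V" and \<phi>: "Cp_map_on p V \<phi>" and b0: "b0 \<in> V" and f: "(f \<longlongrightarrow> b0) F"
  shows "((\<lambda>j. \<phi> (f j)) \<longlongrightarrow> \<phi> b0) F"
proof (rule vec_tendstoI)
  show "((\<lambda>j. \<phi> (f j) $ k) \<longlongrightarrow> \<phi> b0 $ k) F" for k
    using continuous_on_open_tendsto[OF V Cp_imp_continuous_on[OF Cp_map_on_component[OF \<phi>]] b0 f] by simp
qed

lemma Cp_polys_comp:
  fixes \<phi> :: "real^'m::finite \<Rightarrow> real^'n::finite"
  assumes V: "open V" and \<phi>: "Cp_map_on p V \<phi>" and P: "P \<in> polys p"
  shows "Cp_on p V (P \<circ> \<phi>)"
proof -
  obtain a where "P = (\<lambda>x. \<Sum>\<gamma>\<in>{\<gamma>. mdeg \<gamma> \<le> p}. a \<gamma> * mpow x \<gamma>)" using P unfolding polys_def by blast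
  hence "P \<circ> \<phi> = (\<lambda>z. \<Sum>\<gamma>\<in>{\<gamma>. mdeg \<gamma> \<le> p}. a \<gamma> * mpow (\<phi> z - 0) \<gamma>)" by (simp add: o_def)
  thus ?thesis by (simp only:) (intro Cp_sum[OF V finite_mdeg_le] Cp_scale[OF V] Cp_mpow_comp[OF V \<phi>])
qed

lemma mderiv_mpow_comp_expand:
  fixes \<phi> :: "real^'m::finite \<Rightarrow> real^'n::finite"
  assumes V: "open V" and \<phi>: "Cp_map_on p V \<phi>" and \<beta>: "mdeg \<beta> \<le> p" and w: "w \<in> V"
  shows "mderiv \<beta> (\<lambda>z. mpow (\<phi> z - a) \<alpha> / real (mfact \<alpha>)) w =
    (\<Sum>\<delta>\<in>{\<delta>. \<delta> \<le> \<alpha>}. mpow (- a) (\<alpha> - \<delta>) / real (mfact (\<alpha> - \<delta>)) *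
       mderiv \<beta> (\<lambda>z. inverse (real (mfact \<delta>)) * mpow (\<phi> z - 0) \<delta>) w)"
proof -
  let ?c = "\<lambda>\<delta>. mpow (- a) (\<alpha> - \<delta>) / real (mfact (\<alpha> - \<delta>))"
  let ?H = "\<lambda>\<delta> z. inverse (real (mfact \<delta>)) * mpow (\<phi> z - 0) \<delta>"
  have H: "Cp_on p V (?H \<delta>)" for \<delta> by (intro Cp_scale[OF V] Cp_mpow_comp[OF V \<phi>])
  have "mpow (\<phi> z - a) \<alpha> / real (mfact \<alpha>) = (\<Sum>\<delta>\<in>{\<delta>. \<delta> \<le> \<alpha>}. ?c \<delta> * ?H \<delta> z)" for z
    using mpow_add_div_mfact[of "\<phi> z" "- a" \<alpha>] by (simp add: divide_inverse mult_ac)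
  hence "mderiv \<beta> (\<lambda>z. mpow (\<phi> z - a) \<alpha> / real (mfact \<alpha>)) w
      = (\<Sum>\<delta>\<in>{\<delta>. \<delta> \<le> \<alpha>}. mderiv \<beta> (\<lambda>z. ?c \<delta> * ?H \<delta> z) w)"
    by (simp only:) (intro mderiv_sum[OF V finite_multi_index_le _ \<beta> w] Cp_scale[OF V H])
  also have "\<dots> = (\<Sum>\<delta>\<in>{\<delta>. \<delta> \<le> \<alpha>}. ?c \<delta> * mderiv \<beta> (?H \<delta>) w)"
    by (intro sum.cong refl mderiv_scale[OF V H \<beta> w])
  finally show ?thesis .
qed

lemma tendsto_mderiv_mpow_comp:
  fixes \<phi> :: "real^'m::finite \<Rightarrow> real^'n::finite" and y :: "nat \<Rightarrow> real^'m"
  assumes V: "open V" and \<phi>: "Cp_map_on p V \<phi>" and b0: "b0 \<in> V"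
    and y: "y \<longlonglongrightarrow> b0" and yV: "\<And>j. y j \<in> V" and \<beta>: "mdeg \<beta> \<le> p"
  shows "(\<lambda>j. mderiv \<beta> (\<lambda>z. mpow (\<phi> z - \<phi> (y j)) \<alpha> / real (mfact \<alpha>)) (y j))
           \<longlonglongrightarrow> mderiv \<beta> (\<lambda>z. mpow (\<phi> z - \<phi> b0) \<alpha> / real (mfact \<alpha>)) b0"
  unfolding mderiv_mpow_comp_expand[OF V \<phi> \<beta> yV] mderiv_mpow_comp_expand[OF V \<phi> \<beta> b0]
  by (intro tendsto_sum tendsto_mult tendsto_divide tendsto_const tendsto_mpow tendsto_minus
        tendsto_Cp_map[OF V \<phi> b0 y] continuous_on_open_tendsto[OF V _ b0 y] continuous_on_mderiv[OF _ \<beta>]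
        Cp_scale[OF V] Cp_mpow_comp[OF V \<phi>]) (auto simp: mfact_pos)

lemma mderiv_mpow_comp_bounded:
  fixes \<phi> :: "real^'m::finite \<Rightarrow> real^'n::finite" and y :: "nat \<Rightarrow> real^'m"
  assumes V: "open V" and \<phi>: "Cp_map_on p V \<phi>" and b0: "b0 \<in> V"
    and y: "y \<longlonglongrightarrow> b0" and yV: "\<And>j. y j \<in> V" and \<beta>: "mdeg \<beta> \<le> p"
  shows "\<exists>M. \<forall>j. \<bar>mderiv \<beta> (\<lambda>z. mpow (\<phi> z - \<phi> (y j)) \<alpha> / real (mfact \<alpha>)) (y j)\<bar> \<le> M"
proof -
  have "Bseq (\<lambda>j. mderiv \<beta> (\<lambda>z. mpow (\<phi> z - \<phi> (y j)) \<alpha> / real (mfact \<alpha>)) (y j))"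
    using tendsto_mderiv_mpow_comp[OF V \<phi> b0 y yV \<beta>] by (intro convergent_imp_Bseq convergentI)
  thus ?thesis unfolding Bseq_def by auto
qed

lemma zcomp_pushfwd:
  fixes \<phi> :: "real^'m::finite \<Rightarrow> real^'n::finite"
  assumes V: "open V" and \<phi>: "Cp_map_on p V \<phi>" and y: "y \<in> V" and \<zeta>: "\<zeta> \<in> pdual p"
  shows "zcomp (pushfwd p \<phi> y \<zeta>) (\<phi> y) \<alpha> = (\<Sum>\<beta>\<in>{\<beta>. mdeg \<beta> \<le> p \<and> mdeg \<alpha> \<le> mdeg \<beta>}.
           mderiv \<beta> (\<lambda>z. mpow (\<phi> z - \<phi> y) \<alpha> / real (mfact \<alpha>)) y * zcomp \<zeta> y \<beta>)"
proof -
  have "zcomp (pushfwd p \<phi> y \<zeta>) (\<phi> y) \<alpha> = \<zeta> (taylor p y (\<lambda>z. mpow (\<phi> z - \<phi> y) \<alpha> / real (mfact \<alpha>)))"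
    unfolding zcomp_def pushfwd_def pullback_def by (simp add: o_def)
  also have "\<dots> = (\<Sum>\<beta>\<in>{\<beta>. mdeg \<beta> \<le> p}. mderiv \<beta> (\<lambda>z. mpow (\<phi> z - \<phi> y) \<alpha> / real (mfact \<alpha>)) y * zcomp \<zeta> y \<beta>)"
    by (rule pdual_taylor[OF \<zeta>])
  also have "\<dots> = (\<Sum>\<beta>\<in>{\<beta>. mdeg \<beta> \<le> p \<and> mdeg \<alpha> \<le> mdeg \<beta>}.
                    mderiv \<beta> (\<lambda>z. mpow (\<phi> z - \<phi> y) \<alpha> / real (mfact \<alpha>)) y * zcomp \<zeta> y \<beta>)"
  proof (rule sum.mono_neutral_right[OF finite_mdeg_le])
    show "\<forall>\<beta>\<in>{\<beta>. mdeg \<beta> \<le> p} - {\<beta>. mdeg \<beta> \<le> p \<and> mdeg \<alpha> \<le> mdeg \<beta>}.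
            mderiv \<beta> (\<lambda>z. mpow (\<phi> z - \<phi> y) \<alpha> / real (mfact \<alpha>)) y * zcomp \<zeta> y \<beta> = 0"
    proof
      fix \<beta> :: "'m \<Rightarrow> nat"
      assume "\<beta> \<in> {\<beta>. mdeg \<beta> \<le> p} - {\<beta>. mdeg \<beta> \<le> p \<and> mdeg \<alpha> \<le> mdeg \<beta>}"
      hence "mdeg \<beta> < mdeg \<alpha>" "mdeg \<beta> \<le> p" by auto
      thus "mderiv \<beta> (\<lambda>z. mpow (\<phi> z - \<phi> y) \<alpha> / real (mfact \<alpha>)) y * zcomp \<zeta> y \<beta> = 0"
        by (simp add: mderiv_mpow_comp_below_order[OF V \<phi> y])
    qed
  qed auto
  finally show ?thesis .
qed

lemma eventually_Cp_map_dist_power_le: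
  fixes \<phi> :: "real^'m::finite \<Rightarrow> real^'n::finite"
  assumes V: "open V" and \<phi>: "Cp_map_on p V \<phi>" and b0: "b0 \<in> V"
    and a: "a \<longlonglongrightarrow> b0" and x: "x \<longlonglongrightarrow> b0" and "q \<le> p"
  shows "\<exists>L\<ge>0. eventually (\<lambda>j. norm (\<phi> (a j) - \<phi> (x j)) ^ q \<le> (L * norm (a j - x j)) ^ q) sequentially"
proof (cases "q = 0")
  case False
  then obtain p' where p: "p = Suc p'" using \<open>q \<le> p\<close> by (cases p) auto
  obtain L \<delta> where \<delta>: "\<delta> > 0" and Lip: "\<And>x y. norm (x - b0) < \<delta> \<Longrightarrow> norm (y - b0) < \<delta> \<Longrightarrow>
      norm (\<phi> y - \<phi> x) \<le> L * norm (y - x)"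
    using Cp_map_locally_lipschitz[OF V \<phi>[unfolded p] b0] by blast
  have "eventually (\<lambda>j. norm (\<phi> (a j) - \<phi> (x j)) ^ q \<le> (\<bar>L\<bar> * norm (a j - x j)) ^ q) sequentially"
    using tendstoD[OF a \<delta>] tendstoD[OF x \<delta>]
  proof eventually_elim
    case (elim j)
    have "norm (\<phi> (a j) - \<phi> (x j)) \<le> L * norm (a j - x j)"
      by (rule Lip) (use elim in \<open>auto simp: dist_norm\<close>)
    also have "\<dots> \<le> \<bar>L\<bar> * norm (a j - x j)" by (rule mult_right_mono) auto
    finally show ?case by (intro power_mono) auto
  qed
  thus ?thesis by (intro exI[of _ "\<bar>L\<bar>"]) simp
qed (intro exI[of _ 0], simp)

lemma mult_le_weighted_power:
  fixes a h L z c :: real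
  assumes "a \<le> (L * h) ^ q" "0 \<le> L" "0 \<le> h" "h \<le> 1" "r \<le> q" "h ^ r * z \<le> c" "0 \<le> z"
  shows "a * z \<le> L ^ q * c"
proof -
  have "a * z \<le> (L * h) ^ q * z" using assms by (intro mult_right_mono) auto
  also have "\<dots> = L ^ q * (h ^ q * z)" by (simp add: power_mult_distrib)
  also have "\<dots> \<le> L ^ q * (h ^ r * z)"
    using assms by (intro mult_left_mono mult_right_mono power_decreasing) auto
  also have "\<dots> \<le> L ^ q * c" using assms by (intro mult_left_mono) auto
  finally show ?thesis .
qed

lemma eventually_bound_imp_bound:
  fixes F :: "nat \<Rightarrow> real"
  assumes "eventually (\<lambda>j. F j \<le> C0) sequentially"
  shows "\<exists>C. \<forall>j. F j \<le> C"
proof -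
  obtain N where N: "\<And>j. j \<ge> N \<Longrightarrow> F j \<le> C0" using assms unfolding eventually_sequentially by blast
  have "F j \<le> max C0 (\<Sum>j<N. \<bar>F j\<bar>)" for j
  proof (cases "j \<ge> N")
    case True
    thus ?thesis using N[of j] by simp
  next
    case False
    hence "\<bar>F j\<bar> \<le> (\<Sum>j<N. \<bar>F j\<bar>)" by (intro member_le_sum) auto
    thus ?thesis by simp
  qed
  thus ?thesis by blast
qed

lemma ex_bound_finite:
  fixes F :: "'i \<Rightarrow> nat \<Rightarrow> real"
  assumes "finite I" "\<And>i. i \<in> I \<Longrightarrow> \<exists>C. \<forall>j. F i j \<le> C"
  shows "\<exists>C. \<forall>i\<in>I. \<forall>j. F i j \<le> C"
proof -
  have "\<forall>i\<in>I. \<exists>C. \<forall>j. F i j \<le> C" using assms(2) by blast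
  from bchoice[OF this] obtain C where C: "\<forall>i\<in>I. \<forall>j. F i j \<le> C i" by auto
  have "F i j \<le> (\<Sum>i\<in>I. \<bar>C i\<bar>)" if "i \<in> I" for i j
  proof -
    have "F i j \<le> C i" using C that by blast
    also have "\<dots> \<le> \<bar>C i\<bar>" by simp
    also have "\<dots> \<le> (\<Sum>i\<in>I. \<bar>C i\<bar>)" by (rule member_le_sum) (use assms(1) that in auto)
    finally show ?thesis .
  qed
  thus ?thesis by blast
qed

lemma zcomp_pushfwd_bounded:
  fixes \<phi> :: "real^'m::finite \<Rightarrow> real^'n::finite" and a x :: "nat \<Rightarrow> real^'m"
    and \<zeta> :: "nat \<Rightarrow> (real^'m \<Rightarrow> real) \<Rightarrow> real"
  assumes V: "open V" and \<phi>: "Cp_map_on p V \<phi>" and b0: "b0 \<in> V"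
    and aV: "\<And>j. a j \<in> V" and a: "a \<longlonglongrightarrow> b0" and x: "x \<longlonglongrightarrow> b0" and \<zeta>: "\<And>j. \<zeta> j \<in> pdual p"
    and bnd: "\<And>j \<beta>. mdeg \<beta> \<le> p \<Longrightarrow> norm (a j - x j) ^ (p - mdeg \<beta>) * \<bar>zcomp (\<zeta> j) (a j) \<beta>\<bar> \<le> c"
    and \<alpha>: "mdeg \<alpha> \<le> p"
  shows "\<exists>C. \<forall>j. norm (\<phi> (a j) - \<phi> (x j)) ^ (p - mdeg \<alpha>)
                  * \<bar>zcomp (pushfwd p \<phi> (a j) (\<zeta> j)) (\<phi> (a j)) \<alpha>\<bar> \<le> C"
proof -
  define S where "S = {\<beta>::'m \<Rightarrow> nat. mdeg \<beta> \<le> p \<and> mdeg \<alpha> \<le> mdeg \<beta>}"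
  let ?D = "\<lambda>\<beta> j. mderiv \<beta> (\<lambda>z. mpow (\<phi> z - \<phi> (a j)) \<alpha> / real (mfact \<alpha>)) (a j)"
  let ?q = "p - mdeg \<alpha>"
  have "\<forall>\<beta>\<in>S. \<exists>M. \<forall>j. \<bar>?D \<beta> j\<bar> \<le> M"
    unfolding S_def using mderiv_mpow_comp_bounded[OF V \<phi> b0 a aV] by blast
  from bchoice[OF this] obtain M where M: "\<And>\<beta> j. \<beta> \<in> S \<Longrightarrow> \<bar>?D \<beta> j\<bar> \<le> M \<beta>" by blast
  obtain L where L: "L \<ge> 0" and evL:
    "eventually (\<lambda>j. norm (\<phi> (a j) - \<phi> (x j)) ^ ?q \<le> (L * norm (a j - x j)) ^ ?q) sequentially"
    using eventually_Cp_map_dist_power_le[OF V \<phi> b0 a x, of ?q] by auto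
  have "(\<lambda>j. a j - x j) \<longlonglongrightarrow> 0" using tendsto_diff[OF a x] by simp
  hence evh: "eventually (\<lambda>j. norm (a j - x j) \<le> 1) sequentially"
    by (rule eventually_mono[OF tendstoD[OF _ zero_less_one]]) simp
  have "eventually (\<lambda>j. norm (\<phi> (a j) - \<phi> (x j)) ^ ?q * \<bar>zcomp (pushfwd p \<phi> (a j) (\<zeta> j)) (\<phi> (a j)) \<alpha>\<bar>
           \<le> (\<Sum>\<beta>\<in>S. M \<beta> * (L ^ ?q * c))) sequentially"
    using evL evh
  proof eventually_elim
    case (elim j)
    let ?n = "norm (\<phi> (a j) - \<phi> (x j)) ^ ?q" and ?z = "\<lambda>\<beta>. \<bar>zcomp (\<zeta> j) (a j) \<beta>\<bar>"
    have "?n * \<bar>zcomp (pushfwd p \<phi> (a j) (\<zeta> j)) (\<phi> (a j)) \<alpha>\<bar> \<le> ?n * (\<Sum>\<beta>\<in>S. \<bar>?D \<beta> j\<bar> * ?z \<beta>)"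
      unfolding zcomp_pushfwd[OF V \<phi> aV \<zeta>] S_def[symmetric]
      by (intro mult_left_mono order_trans[OF sum_abs]) (auto simp: abs_mult)
    also have "\<dots> = (\<Sum>\<beta>\<in>S. \<bar>?D \<beta> j\<bar> * (?n * ?z \<beta>))" by (simp add: sum_distrib_left mult_ac)
    also have "\<dots> \<le> (\<Sum>\<beta>\<in>S. M \<beta> * (L ^ ?q * c))"
    proof (rule sum_mono)
      fix \<beta> assume \<beta>: "\<beta> \<in> S"
      have "?n * ?z \<beta> \<le> L ^ ?q * c"
        using \<beta> bnd[of \<beta> j] unfolding S_def
        by (intro mult_le_weighted_power[OF elim(1) L _ elim(2), where r = "p - mdeg \<beta>"]) auto
      with M[OF \<beta>, of j] show "\<bar>?D \<beta> j\<bar> * (?n * ?z \<beta>) \<le> M \<beta> * (L ^ ?q * c)"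
        by (rule mult_mono) (use M[OF \<beta>, of j] in \<open>auto intro: order_trans[OF abs_ge_zero]\<close>)
    qed
    finally show ?case .
  qed
  thus ?thesis by (rule eventually_bound_imp_bound)
qed

theorem lemma5p1:
  fixes U :: "(real^'n::finite) set" and X :: "(real^'n) set"
    and V :: "(real^'m::finite) set" and Y :: "(real^'m) set"
    and \<phi> :: "real^'m \<Rightarrow> real^'n"
    and p k :: nat
    and b :: "nat \<Rightarrow> nat \<Rightarrow> real^'m"
    and \<eta> :: "nat \<Rightarrow> nat \<Rightarrow> (real^'m \<Rightarrow> real) \<Rightarrow> real"
    and b0 :: "real^'m" and \<eta>0 :: "(real^'m \<Rightarrow> real) \<Rightarrow> real"
    and c :: real
  assumes "open U" and "open V"
    and "closedin (top_of_set U) X" and "closedin (top_of_set V) Y"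
    and "\<phi> ` V \<subseteq> U" and "Cp_map_on p V \<phi>" and "\<phi> ` Y \<subseteq> X"
    and "k \<ge> 1"
    and "\<forall>i\<le>k. \<forall>j. b i j \<in> Y"
    and "\<forall>i\<le>k. \<forall>j. \<eta> i j \<in> pdual p"
    and "b0 \<in> Y" and "\<forall>i\<le>k. (\<lambda>j. b i j) \<longlonglongrightarrow> b0"
    and "\<eta>0 \<in> pdual p"
    and "dual_tendsto p (\<lambda>j P. \<Sum>i\<le>k. \<eta> i j P) \<eta>0"
    and "\<forall>i\<le>k. \<forall>j. \<forall>\<beta>::'m \<Rightarrow> nat. mdeg \<beta> \<le> p \<longrightarrow>
           norm (b i j - b 0 j) ^ (p - mdeg \<beta>) * \<bar>zcomp (\<eta> i j) (b i j) \<beta>\<bar> \<le> c"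
  shows "(\<forall>i\<le>k. (\<lambda>j. \<phi> (b i j)) \<longlonglongrightarrow> \<phi> b0) \<and> \<phi> b0 \<in> X
       \<and> dual_tendsto p (\<lambda>j P. \<Sum>i\<le>k. pushfwd p \<phi> (b i j) (\<eta> i j) P) (pushfwd p \<phi> b0 \<eta>0)
       \<and> (\<exists>c'. \<forall>i\<le>k. \<forall>j. \<forall>\<alpha>::'n \<Rightarrow> nat. mdeg \<alpha> \<le> p \<longrightarrow>
            norm (\<phi> (b i j) - \<phi> (b 0 j)) ^ (p - mdeg \<alpha>)
              * \<bar>zcomp (pushfwd p \<phi> (b i j) (\<eta> i j)) (\<phi> (b i j)) \<alpha>\<bar> \<le> c')"
proof -
  note V = assms(2) and \<phi> = assms(6)
  have "Y \<subseteq> V" using closedin_subset[OF assms(4)] by simp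
  hence b0: "b0 \<in> V" and bV: "\<And>i j. i \<le> k \<Longrightarrow> b i j \<in> V" using assms(9,11) by auto
  have bconv: "\<And>i. i \<le> k \<Longrightarrow> (\<lambda>j. b i j) \<longlonglongrightarrow> b0" and \<eta>: "\<And>i j. i \<le> k \<Longrightarrow> \<eta> i j \<in> pdual p"
    and bnd: "\<And>i j \<beta>. i \<le> k \<Longrightarrow> mdeg \<beta> \<le> p \<Longrightarrow>
                norm (b i j - b 0 j) ^ (p - mdeg \<beta>) * \<bar>zcomp (\<eta> i j) (b i j) \<beta>\<bar> \<le> c"
    using assms(10,12,15) by auto
  have "dual_tendsto p (\<lambda>j P. \<Sum>i\<le>k. pushfwd p \<phi> (b i j) (\<eta> i j) P) (pushfwd p \<phi> b0 \<eta>0)"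
    unfolding dual_tendsto_def pushfwd_def pullback_def
    using sum_taylor_functionals_tendsto[OF V Cp_polys_comp[OF V \<phi>] b0 bV bconv \<eta> assms(13,14) bnd]
    by blast
  moreover
  define G where "G i \<alpha> j = norm (\<phi> (b i j) - \<phi> (b 0 j)) ^ (p - mdeg \<alpha>)
      * \<bar>zcomp (pushfwd p \<phi> (b i j) (\<eta> i j)) (\<phi> (b i j)) \<alpha>\<bar>" for i \<alpha> j
  have "\<exists>C. \<forall>j. G i \<alpha> j \<le> C" if "i \<le> k" "mdeg \<alpha> \<le> p" for i \<alpha>
    unfolding G_def using that bconv[of 0]
    by (intro zcomp_pushfwd_bounded[OF V \<phi> b0 bV bconv _ \<eta> bnd]) auto
  hence "\<exists>C. \<forall>i\<alpha>\<in>{..k} \<times> {\<alpha>. mdeg \<alpha> \<le> p}. \<forall>j. G (fst i\<alpha>) (snd i\<alpha>) j \<le> C"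
    by (intro ex_bound_finite) (auto simp: finite_mdeg_le)
  hence "\<exists>c'. \<forall>i\<le>k. \<forall>j. \<forall>\<alpha>::'n \<Rightarrow> nat. mdeg \<alpha> \<le> p \<longrightarrow> G i \<alpha> j \<le> c'" by fastforce
  ultimately show ?thesis unfolding G_def
    using tendsto_Cp_map[OF V \<phi> b0 bconv] assms(7,11) by blast
qed

end
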